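(* Let $n=2^t$, let $L$ be a Latin cube of order $n$ that is isomorphic to the Boolean Latin cube of order $n$, and let $A$ be an $(m,m,m,m)$-cube of order $n$. Let $\alpha,\gamma,\kappa,\theta,\epsilon$ be constants with $\epsilon n\geq 3$ and $$\alpha n-21\kappa n -7\epsilon n-\frac{84\kappa}{\epsilon}n-\frac{21\theta}{\epsilon} n-\frac{80\kappa}{\theta} n-28>0.$$ Suppose that: (a) no row of $L$ contains more than $\kappa n$ conflicts with $A$; (b) no column of $L$ contains more than $\kappa n$ conflicts with $A$; (c) no file of $L$ contains more than $\kappa n$ conflicts with $A$; (d) no symbol-set of $L$ contains more than $\kappa n$ conflicts with $A$; (e) no transversal-set of $L$ contains more than $\kappa n$ conflicts with $A$; (f) each cell of $L$ belongs to at least $\alpha n$ allowed $3$-cubes. Then there is a set of pairwise disjoint allowed $3$-cubes of $L$ such that each conflict of $L$ with $A$ belongs to one of them; consequently, swapping on all these $3$-cubes yields a Latin cube $L'$ that avoids $A$.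
   Context: Cells of a cube of order $n$ are triples $(i,j,k)\in[n]^3$. A row is $\{(i,j^*,k):j^*\in[n]\}$, a column $\{(i^*,j,k):i^*\in[n]\}$, a file $\{(i,j,k^* ):k^*\in[n]\}$. Row layer $i$ is $\{(i,j^*,k^* )\}$, column layer $j$ is $\{(i^*,j,k^* )\}$, file layer $k$ is $\{(i^*,j^*,k)\}$. An $(m,m,m,m)$-cube of order $n$ is a cube $A$ with $A(i,j,k)\subseteq[n]$ for each cell, each cell containing at most $m$ symbols and each symbol occurring at most $m$ times in each row, each column and each file. A Latin cube $L$ of order $n$ has one symbol $L(i,j,k)\in[n]$ in each cell with each symbol exactly once in every row, column and file. Let $a_x$ be the $x$-th smallest element of $\mathbb{Z}_2^t$, $x=1,\dots,2^t$. The Boolean Latin cube $B$ of order $n=2^t$ has $B(i,j,k)=x$ where $a_x=a_i+a_j+a_k$ in $\mathbb{Z}_2^t$. $L$ is isomorphic to $B$ if $L$ is obtained from $B$ by permuting row layers, column layers, file layers and/or symbols. A conflict of $L$ with $A$ is a cell with $L(i,j,k)\in A(i,j,k)$; $L'$ avoids $A$ if it has no conflicts with $A$. A symbol-set of $L$ is the set of all cells in a given row layer, column layer or file layer of $L$ that contain a given symbol. A $3$-cube in $L$ is a set of eight cells $\{(i_a,j_b,k_c): a,b,c\in\{1,2\}\}$ with $i_1\ne i_2$, $j_1\neq j_2$, $k_1\ne k_2$, such that $L(i_1,j_1,k_1)=L(i_2,j_2,k_1)=L(i_1,j_2,k_2)=L(i_2,j_1,k_2)=x_1$ and $L(i_1,j_2,k_1)=L(i_2,j_1,k_1)=L(i_1,j_1,k_2)=L(i_2,j_2,k_2)=x_2$.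 A swap on this $3$-cube interchanges $x_1$ and $x_2$ in these eight cells (all other cells unchanged), producing another Latin cube. A $3$-cube is allowed if after swapping on it none of its eight cells is a conflict. A transversal-set of $L$ is a set of $n$ cells no two in the same row, column or file, no two containing the same symbol, and such that any two of its cells lie in a unique common $3$-cube. Following the paper's convention, floors/ceilings are omitted where not crucial. *)

theory Defs
  imports Complex_Main
begin

type_synonym cell = "nat \<times> nat \<times> nat"

definition cells :: "nat \<Rightarrow> cell set" where
  "cells n = {1..n} \<times> {1..n} \<times> {1..n}"

definition row :: "nat \<Rightarrow> nat \<Rightarrow> nat \<Rightarrow> cell set" where
  "row n i k = {(i, j', k) | j'. j' \<in> {1..n}}"
definition col :: "nat \<Rightarrow> nat \<Rightarrow> nat \<Rightarrow> cell set" where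
  "col n j k = {(i', j, k) | i'. i' \<in> {1..n}}"
definition fil :: "nat \<Rightarrow> nat \<Rightarrow> nat \<Rightarrow> cell set" where
  "fil n i j = {(i, j, k') | k'. k' \<in> {1..n}}"

definition row_layer :: "nat \<Rightarrow> nat \<Rightarrow> cell set" where
  "row_layer n i = {(i, j', k') | j' k'. j' \<in> {1..n} \<and> k' \<in> {1..n}}"
definition col_layer :: "nat \<Rightarrow> nat \<Rightarrow> cell set" where
  "col_layer n j = {(i', j, k') | i' k'. i' \<in> {1..n} \<and> k' \<in> {1..n}}"
definition file_layer :: "nat \<Rightarrow> nat \<Rightarrow> cell set" where
  "file_layer n k = {(i', j', k) | i' j'. i' \<in> {1..n} \<and> j' \<in> {1..n}}"

definition lines :: "nat \<Rightarrow> cell set set" where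
  "lines n = {row n i k | i k. i \<in> {1..n} \<and> k \<in> {1..n}}
           \<union> {col n j k | j k. j \<in> {1..n} \<and> k \<in> {1..n}}
           \<union> {fil n i j | i j. i \<in> {1..n} \<and> j \<in> {1..n}}"

definition layers :: "nat \<Rightarrow> cell set set" where
  "layers n = {row_layer n i | i. i \<in> {1..n}} \<union> {col_layer n j | j. j \<in> {1..n}}
            \<union> {file_layer n k | k. k \<in> {1..n}}"

definition mmmm_cube :: "nat \<Rightarrow> nat \<Rightarrow> (cell \<Rightarrow> nat set) \<Rightarrow> bool" where
  "mmmm_cube n m A \<longleftrightarrow>
     (\<forall>c \<in> cells n. A c \<subseteq> {1..n} \<and> card (A c) \<le> m) \<and>
     (\<forall>l \<in> lines n. \<forall>x. card {c \<in> l. x \<in> A c} \<le> m)"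

definition latin_cube :: "nat \<Rightarrow> (cell \<Rightarrow> nat) \<Rightarrow> bool" where
  "latin_cube n L \<longleftrightarrow>
     (\<forall>c \<in> cells n. L c \<in> {1..n}) \<and>
     (\<forall>l \<in> lines n. \<forall>x \<in> {1..n}. \<exists>!c. c \<in> l \<and> L c = x)"

text \<open>Boolean Latin cube of order 2^t: identify [n] with Z_2^t via x \<mapsto> binary
  representation of x-1 (x-th smallest element); addition in Z_2^t is xor.\<close>
definition boolean_cube :: "cell \<Rightarrow> nat" where
  "boolean_cube c = (case c of (i, j, k) \<Rightarrow> Bit_Operations.xor (Bit_Operations.xor (i - 1) (j - 1)) (k - 1) + 1)"

definition iso_boolean :: "nat \<Rightarrow> (cell \<Rightarrow> nat) \<Rightarrow> bool" where
  "iso_boolean n L \<longleftrightarrow>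
     (\<exists>\<sigma>1 \<sigma>2 \<sigma>3 \<tau>. bij_betw \<sigma>1 {1..n} {1..n} \<and> bij_betw \<sigma>2 {1..n} {1..n} \<and>
        bij_betw \<sigma>3 {1..n} {1..n} \<and> bij_betw \<tau> {1..n} {1..n} \<and>
        (\<forall>i \<in> {1..n}. \<forall>j \<in> {1..n}. \<forall>k \<in> {1..n}.
            L (i, j, k) = \<tau> (boolean_cube (\<sigma>1 i, \<sigma>2 j, \<sigma>3 k))))"

definition conflicts :: "nat \<Rightarrow> (cell \<Rightarrow> nat) \<Rightarrow> (cell \<Rightarrow> nat set) \<Rightarrow> cell set" where
  "conflicts n L A = {c \<in> cells n. L c \<in> A c}"

definition avoids :: "nat \<Rightarrow> (cell \<Rightarrow> nat) \<Rightarrow> (cell \<Rightarrow> nat set) \<Rightarrow> bool" where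
  "avoids n L A \<longleftrightarrow> conflicts n L A = {}"

definition symbol_sets :: "nat \<Rightarrow> (cell \<Rightarrow> nat) \<Rightarrow> cell set set" where
  "symbol_sets n L = {{c \<in> Y. L c = x} | Y x. Y \<in> layers n \<and> x \<in> {1..n}}"

definition three_cubes :: "nat \<Rightarrow> (cell \<Rightarrow> nat) \<Rightarrow> cell set set" where
  "three_cubes n L = {S. \<exists>i1 i2 j1 j2 k1 k2 x1 x2.
      i1 \<in> {1..n} \<and> i2 \<in> {1..n} \<and> j1 \<in> {1..n} \<and> j2 \<in> {1..n} \<and> k1 \<in> {1..n} \<and> k2 \<in> {1..n} \<and>
      i1 \<noteq> i2 \<and> j1 \<noteq> j2 \<and> k1 \<noteq> k2 \<and>
      L (i1, j1, k1) = x1 \<and> L (i2, j2, k1) = x1 \<and> L (i1, j2, k2) = x1 \<and> L (i2, j1, k2) = x1 \<and>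
      L (i1, j2, k1) = x2 \<and> L (i2, j1, k1) = x2 \<and> L (i1, j1, k2) = x2 \<and> L (i2, j2, k2) = x2 \<and>
      S = {(a, b, c) | a b c. a \<in> {i1, i2} \<and> b \<in> {j1, j2} \<and> c \<in> {k1, k2}}}"

definition swap :: "(cell \<Rightarrow> nat) \<Rightarrow> cell set \<Rightarrow> cell \<Rightarrow> nat" where
  "swap L S c = (if c \<in> S then (THE y. y \<in> L ` S \<and> y \<noteq> L c) else L c)"

definition allowed :: "nat \<Rightarrow> (cell \<Rightarrow> nat) \<Rightarrow> (cell \<Rightarrow> nat set) \<Rightarrow> cell set \<Rightarrow> bool" where
  "allowed n L A S \<longleftrightarrow> S \<in> three_cubes n L \<and> (\<forall>c \<in> S. swap L S c \<notin> A c)"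

definition swap_all :: "(cell \<Rightarrow> nat) \<Rightarrow> cell set set \<Rightarrow> cell \<Rightarrow> nat" where
  "swap_all L F c = (if \<exists>S \<in> F. c \<in> S then swap L (THE S. S \<in> F \<and> c \<in> S) c else L c)"

definition transversal_set :: "nat \<Rightarrow> (cell \<Rightarrow> nat) \<Rightarrow> cell set \<Rightarrow> bool" where
  "transversal_set n L T \<longleftrightarrow>
     T \<subseteq> cells n \<and> card T = n \<and>
     (\<forall>l \<in> lines n. card (T \<inter> l) \<le> 1) \<and>
     inj_on L T \<and>
     (\<forall>c \<in> T. \<forall>d \<in> T. c \<noteq> d \<longrightarrow> card {S \<in> three_cubes n L. c \<in> S \<and> d \<in> S} = 1)"

end

(*
  Relabelling rows, columns, files and symbols turns L into the cube L(a, b, c) = a + b + c over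
  \<bbbF>\<^sub>2\<^sup>t. Its 3-cubes are then exactly the subcubes {a, a + d} \<times> {b, b + d} \<times> {c, c + d}
  with d \<noteq> 0, and the lines p + e \<otimes> \<bbbF>\<^sub>2\<^sup>t in the seven nonzero directions e \<in> \<bbbF>\<^sub>2\<^sup>3 are
  the rows, columns and files (one nonzero entry), the symbol-sets (two) and the transversal-sets
  (three), so by (a)-(e) each of them carries at most \<kappa>n conflicts.

  The cubes are chosen greedily, one for each conflict not yet covered, keeping every line
  (resp. plane {p. w \<cdot> p = v}) within \<epsilon>n + 8 + 8k (resp. \<theta>n\<^sup>2 + 8 + 8k) covered points, where
  k counts the chosen cubes through its conflicts. A shift d for the next conflict c is bad only
  if c + {0, d}\<^sup>3 meets a chosen cube, or a heavy line or plane missing c; disjoint lines inside a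
  plane and disjoint planes inside the grid bound the bad shifts by less than \<alpha>n, so by (f) an
  allowed cube is always available.

  Swapping keeps the cube Latin: along a line in a unit direction u the new symbol of q is
  \<Sigma>q + d(q), where d(q) is the side of the cube through q, and q \<mapsto> q + u \<otimes> d(q) is an
  involution.
*)
theory Submission
  imports Defs
begin

unbundle bit_operations_syntax

section \<open>Exclusive or on natural numbers\<close>

lemma xor_cancel_left [simp]: "(x::nat) XOR (x XOR y) = y"
  by (simp add: xor.assoc[symmetric])

lemma xor_cancel_right [simp]: "((y::nat) XOR x) XOR x = y"
  by (simp add: xor.assoc)

lemma xor_left_cancel_iff [simp]: "((x::nat) XOR y = x XOR z) \<longleftrightarrow> y = z"
  by (metis xor_cancel_left)

lemma xor_right_cancel_iff [simp]: "((y::nat) XOR x = z XOR x) \<longleftrightarrow> y = z"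
  by (metis xor_cancel_right)

lemma xor_eq_0_iff [simp]: "((x::nat) XOR y = 0) \<longleftrightarrow> x = y"
  by (metis xor_cancel_left xor.right_neutral xor_self_eq)

lemma xor_eq_self_iff [simp]: "((x::nat) XOR y = x) \<longleftrightarrow> y = 0" "(x = x XOR y) \<longleftrightarrow> y = 0"
  by (metis xor_left_cancel_iff xor.right_neutral)+

lemma xor_less_power2: "(x::nat) < 2 ^ t \<Longrightarrow> y < 2 ^ t \<Longrightarrow> x XOR y < 2 ^ t"
  by (metis take_bit_nat_eq_self_iff take_bit_xor)

lemmas xor_ac = xor.assoc xor.commute xor.left_commute

section \<open>Points and directions\<close>

text \<open>A point is an element of \<open>(\<bbbF>\<^sub>2\<^sup>t)\<^sup>3\<close>, each coordinate a number below \<open>2\<^sup>t\<close> with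
  XOR as addition; a direction is a nonzero \<open>e \<in> \<bbbF>\<^sub>2\<^sup>3\<close>, and \<open>smul e g\<close> is the tensor \<open>e \<otimes> g\<close>.\<close>

type_synonym point = "nat \<times> nat \<times> nat"
type_synonym dir = "bool \<times> bool \<times> bool"

abbreviation dzero :: dir where "dzero \<equiv> (False, False, False)"

fun padd :: "point \<Rightarrow> point \<Rightarrow> point" where
  "padd (a, b, c) (a', b', c') = (a XOR a', b XOR b', c XOR c')"

fun smul :: "dir \<Rightarrow> nat \<Rightarrow> point" where
  "smul (e1, e2, e3) g = (if e1 then g else 0, if e2 then g else 0, if e3 then g else 0)"

fun dot :: "dir \<Rightarrow> point \<Rightarrow> nat" where
  "dot (w1, w2, w3) (a, b, c) = (if w1 then a else 0) XOR (if w2 then b else 0) XOR (if w3 then c else 0)"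

abbreviation diag :: dir where "diag \<equiv> (True, True, True)"

abbreviation psum :: "point \<Rightarrow> nat" where "psum \<equiv> dot diag"

fun dadd :: "dir \<Rightarrow> dir \<Rightarrow> dir" where
  "dadd (e1, e2, e3) (f1, f2, f3) = (e1 \<noteq> f1, e2 \<noteq> f2, e3 \<noteq> f3)"

fun ddot :: "dir \<Rightarrow> dir \<Rightarrow> bool" where
  "ddot (f1, f2, f3) (w1, w2, w3) = ((f1 \<and> w1) \<noteq> ((f2 \<and> w2) \<noteq> (f3 \<and> w3)))"

fun dcross :: "dir \<Rightarrow> dir \<Rightarrow> dir" where
  "dcross (e1, e2, e3) (f1, f2, f3) =
     ((e2 \<and> f3) \<noteq> (e3 \<and> f2), (e3 \<and> f1) \<noteq> (e1 \<and> f3), (e1 \<and> f2) \<noteq> (e2 \<and> f1))"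

fun at_pivot :: "dir \<Rightarrow> dir \<Rightarrow> bool" where
  "at_pivot (e1, e2, e3) (f1, f2, f3) = (if e1 then f1 else if e2 then f2 else f3)"

fun subcube :: "point \<Rightarrow> nat \<Rightarrow> point set" where
  "subcube (a, b, c) d = {a, a XOR d} \<times> {b, b XOR d} \<times> {c, c XOR d}"

definition nonzero_dirs :: "dir set" where
  "nonzero_dirs = - {dzero}"

definition unit_dirs :: "dir set" where
  "unit_dirs = {(True, False, False), (False, True, False), (False, False, True)}"

text \<open>One representative of each class of \<open>(\<bbbF>\<^sub>2\<^sup>3 - 0) / \<langle>e\<rangle>\<close> other than \<open>\<langle>e\<rangle>\<close> itself.\<close>
definition reduced_dirs :: "dir \<Rightarrow> dir set" where
  "reduced_dirs e = {f \<in> nonzero_dirs. \<not> at_pivot e f}"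

lemma nonzero_dirs_eq:
  "nonzero_dirs = {(True, False, False), (False, True, False), (False, False, True),
     (True, True, False), (True, False, True), (False, True, True), (True, True, True)}"
  unfolding nonzero_dirs_def by auto

lemma card_nonzero_dirs: "card nonzero_dirs = 7"
  by (simp add: nonzero_dirs_eq)

lemma finite_nonzero_dirs [simp]: "finite nonzero_dirs"
  by (simp add: nonzero_dirs_eq)

lemma mem_nonzero_dirs [simp]: "e \<in> nonzero_dirs \<longleftrightarrow> e \<noteq> dzero"
  by (simp add: nonzero_dirs_def)

lemma card_reduced_dirs: "card (reduced_dirs e) = 3"
  unfolding reduced_dirs_def Collect_conj_eq Collect_mem_eq nonzero_dirs_eq
  by (cases e) (simp add: Int_insert_left)

lemma reduced_dirs_cover:
  "e \<noteq> dzero \<Longrightarrow> f \<noteq> dzero \<Longrightarrow> f \<noteq> e \<Longrightarrow> f \<in> reduced_dirs e \<or> dadd f e \<in> reduced_dirs e"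
  unfolding reduced_dirs_def by (cases e; cases f) auto

lemma reduced_dirs_ne: "f \<in> reduced_dirs e \<Longrightarrow> e \<noteq> dzero \<Longrightarrow> f \<noteq> dzero \<and> f \<noteq> e"
  unfolding reduced_dirs_def by (cases e; cases f) auto

lemma dcross_orthogonal:
  "e \<noteq> dzero \<Longrightarrow> f \<noteq> dzero \<Longrightarrow> f \<noteq> e \<Longrightarrow>
   dcross e f \<noteq> dzero \<and> \<not> ddot e (dcross e f) \<and> \<not> ddot f (dcross e f)"
  by (cases e; cases f) auto

lemma exists_orthogonal_dir: "w \<noteq> dzero \<Longrightarrow> \<exists>e. e \<noteq> dzero \<and> \<not> ddot e w"
  by (cases w) (metis ddot.simps)

lemma padd_assoc: "padd (padd p q) r = padd p (padd q r)"
  by (cases p; cases q; cases r) (simp add: xor.assoc)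

lemma padd_self [simp]: "padd p p = (0, 0, 0)"
  by (cases p) simp

lemma padd_zero [simp]: "padd p (0, 0, 0) = p" "padd (0, 0, 0) p = p"
  by (cases p; simp)+

lemma padd_cancel_left [simp]: "padd p (padd p q) = q"
  by (metis padd_assoc padd_self padd_zero(2))

lemma padd_left_cancel_iff [simp]: "padd p q = padd p r \<longleftrightarrow> q = r"
  by (metis padd_cancel_left)

lemma smul_zero [simp]: "smul e 0 = (0, 0, 0)" "smul dzero g = (0, 0, 0)"
  by (cases e; simp)+

lemma smul_xor: "smul e (g XOR h) = padd (smul e g) (smul e h)"
  by (cases e) simp

lemma smul_dadd: "smul (dadd f e) d = padd (smul f d) (smul e d)"
  by (cases e; cases f) simp

lemma smul_inj_iff: "e \<noteq> dzero \<Longrightarrow> smul e g = smul e h \<longleftrightarrow> g = h"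
  by (cases e) auto

lemma smul_eq_smul_diff: "smul f g = smul e h \<Longrightarrow> f \<noteq> e \<Longrightarrow> f \<noteq> dzero \<Longrightarrow> g = 0"
  by (cases f; cases e) (auto split: if_splits)

lemma smul_eq_smul_diag: "smul f g = smul diag h \<Longrightarrow> h \<noteq> 0 \<Longrightarrow> g = h"
  by (cases f) (auto split: if_splits)

lemma dot_padd: "dot w (padd p q) = dot w p XOR dot w q"
  by (cases w; cases p; cases q) (auto simp: xor_ac)

lemma dot_smul: "dot w (smul f d) = (if ddot f w then d else 0)"
  by (cases w; cases f) auto

lemma psum_smul_unit: "u \<in> unit_dirs \<Longrightarrow> psum (smul u g) = g"
  by (auto simp: unit_dirs_def)

lemma subcube_mem_iff: "q \<in> subcube p d \<longleftrightarrow> (\<exists>f. q = padd p (smul f d))"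
proof (cases p)
  case (fields a b c)
  show ?thesis
  proof
    assume "q \<in> subcube p d"
    then obtain x y z where q: "q = (x, y, z)" "x \<in> {a, a XOR d}" "y \<in> {b, b XOR d}" "z \<in> {c, c XOR d}"
      using fields by (cases q) auto
    then have "q = padd p (smul (x \<noteq> a, y \<noteq> b, z \<noteq> c) d)"
      using fields by auto
    then show "\<exists>f. q = padd p (smul f d)" ..
  next
    assume "\<exists>f. q = padd p (smul f d)"
    then obtain f where "q = padd p (smul f d)" ..
    then show "q \<in> subcube p d"
      using fields by (cases f) auto
  qed
qed

lemma subcube_self: "p \<in> subcube p d"
  by (cases p) simp

lemma finite_subcube [simp]: "finite (subcube p d)"
  by (cases p) simp

lemma card_subcube_le: "card (subcube p d) \<le> 8"
proof (cases p)
  case (fields a b c)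
  have "card {a, a XOR d} * card {b, b XOR d} * card {c, c XOR d} \<le> 2 * 2 * 2"
    by (intro mult_le_mono) (auto simp: card_insert_if)
  then show ?thesis
    using fields by (simp only: subcube.simps card_cartesian_product)
qed

lemma subcube_eq_of_mem: "q \<in> subcube p d \<Longrightarrow> subcube q d = subcube p d"
proof -
  assume "q \<in> subcube p d"
  then obtain f where f: "q = padd p (smul f d)"
    using subcube_mem_iff by blast
  have "x \<in> subcube p d \<longleftrightarrow> x \<in> subcube q d" for x
  proof
    assume "x \<in> subcube p d"
    then obtain g where "x = padd p (smul g d)"
      using subcube_mem_iff by blast
    then have "x = padd q (smul (dadd f g) d)"
      using f by (simp add: smul_dadd padd_assoc)
    then show "x \<in> subcube q d"
      using subcube_mem_iff by blast
  next
    assume "x \<in> subcube q d"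
    then obtain g where "x = padd q (smul g d)"
      using subcube_mem_iff by blast
    then have "x = padd p (smul (dadd f g) d)"
      using f by (simp add: smul_dadd padd_assoc)
    then show "x \<in> subcube p d"
      using subcube_mem_iff by blast
  qed
  then show ?thesis
    by auto
qed

lemma subcube_side_unique: "subcube p d = subcube p' d' \<Longrightarrow> d = d'"
proof -
  assume eq: "subcube p d = subcube p' d'"
  obtain a b c a' b' c' where p: "p = (a, b, c)" and p': "p' = (a', b', c')"
    by (cases p; cases p')
  have "fst ` subcube p d = {a, a XOR d}" "fst ` subcube p' d' = {a', a' XOR d'}"
    using p p' by auto
  then have "{a, a XOR d} = {a', a' XOR d'}"
    using eq by simp
  then have "(a = a' \<and> a XOR d = a' XOR d') \<or> (a = a' XOR d' \<and> a XOR d = a')"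
    by (auto simp: doubleton_eq_iff)
  then show "d = d'"
    by (metis xor_cancel_left xor_left_cancel_iff xor.commute)
qed

section \<open>Lines and planes of the grid\<close>

locale boolean_grid =
  fixes t n :: nat
  assumes n_eq: "n = 2 ^ t"
begin

definition grid :: "point set" where
  "grid = {..<n} \<times> {..<n} \<times> {..<n}"

definition dline :: "dir \<Rightarrow> point \<Rightarrow> point set" where
  "dline e p = (\<lambda>g. padd p (smul e g)) ` {..<n}"

definition plane :: "dir \<Rightarrow> nat \<Rightarrow> point set" where
  "plane w v = {p \<in> grid. dot w p = v}"

lemma n_pos: "n > 0"
  using n_eq by simp

lemma xor_less: "x < n \<Longrightarrow> y < n \<Longrightarrow> x XOR y < n"
  using n_eq xor_less_power2 by blast

lemma mem_grid_iff: "(a, b, c) \<in> grid \<longleftrightarrow> a < n \<and> b < n \<and> c < n"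
  by (simp add: grid_def)

lemma finite_grid [simp]: "finite grid"
  by (simp add: grid_def)

lemma padd_grid: "p \<in> grid \<Longrightarrow> q \<in> grid \<Longrightarrow> padd p q \<in> grid"
  by (cases p; cases q) (auto simp: mem_grid_iff xor_less)

lemma smul_grid: "g < n \<Longrightarrow> smul e g \<in> grid"
  using n_pos by (cases e) (auto simp: mem_grid_iff)

lemma dot_less: "p \<in> grid \<Longrightarrow> dot w p < n"
  using n_pos by (cases w; cases p) (auto simp: mem_grid_iff xor_less)

lemma dline_mem_iff: "q \<in> dline e p \<longleftrightarrow> (\<exists>g<n. q = padd p (smul e g))"
  unfolding dline_def by auto

lemma dline_subset_grid: "p \<in> grid \<Longrightarrow> dline e p \<subseteq> grid"
  unfolding dline_def by (auto intro!: padd_grid smul_grid)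

lemma dline_self: "p \<in> dline e p"
  unfolding dline_def using n_pos by (auto intro!: image_eqI[of _ _ 0])

lemma dline_eq_of_mem: "q \<in> dline e p \<Longrightarrow> dline e q = dline e p"
proof -
  assume "q \<in> dline e p"
  then obtain g where g: "g < n" "q = padd p (smul e g)"
    by (auto simp: dline_mem_iff)
  have "x \<in> dline e p \<longleftrightarrow> x \<in> dline e q" for x
  proof
    assume "x \<in> dline e p"
    then obtain h where h: "h < n" "x = padd p (smul e h)"
      by (auto simp: dline_mem_iff)
    then have "x = padd q (smul e (g XOR h))"
      using g by (simp add: smul_xor padd_assoc)
    then show "x \<in> dline e q"
      using g h xor_less by (auto simp: dline_mem_iff)
  next
    assume "x \<in> dline e q"
    then obtain h where h: "h < n" "x = padd q (smul e h)"
      by (auto simp: dline_mem_iff)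
    then have "x = padd p (smul e (g XOR h))"
      using g by (simp add: smul_xor padd_assoc)
    then show "x \<in> dline e p"
      using g h xor_less by (auto simp: dline_mem_iff)
  qed
  then show ?thesis
    by auto
qed

lemma dline_eq_or_disjoint: "dline e p \<inter> dline e q \<noteq> {} \<Longrightarrow> dline e p = dline e q"
  using dline_eq_of_mem by blast

lemma dline_sym: "x \<in> dline e y \<Longrightarrow> y \<in> dline e x"
  using dline_eq_of_mem dline_self by blast

lemma finite_dline [simp]: "finite (dline e p)"
  by (simp add: dline_def)

lemma card_dline: "e \<noteq> dzero \<Longrightarrow> card (dline e p) = n"
  unfolding dline_def by (subst card_image) (auto simp: inj_on_def smul_inj_iff)

lemma subcube_subset_grid: "p \<in> grid \<Longrightarrow> d < n \<Longrightarrow> subcube p d \<subseteq> grid"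
  by (metis padd_grid smul_grid subcube_mem_iff subsetI)

lemma finite_plane [simp]: "finite (plane w v)"
  by (simp add: plane_def)

lemma card_plane_le: "w \<noteq> dzero \<Longrightarrow> card (plane w v) \<le> n\<^sup>2"
proof -
  assume "w \<noteq> dzero"
  obtain w1 w2 w3 where w: "w = (w1, w2, w3)"
    by (cases w)
  have "\<exists>\<pi>. inj_on \<pi> (plane w v) \<and> \<pi> ` plane w v \<subseteq> {..<n} \<times> {..<n}"
  proof (cases w1)
    case True
    have "inj_on (\<lambda>(a, b, c). (b, c)) (plane w v)"
      unfolding inj_on_def plane_def using True w by auto
    then show ?thesis
      by (intro exI[of _ "\<lambda>(a, b, c). (b, c)"]) (auto simp: plane_def grid_def)
  next
    case w1: False
    show ?thesis
    proof (cases w2)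
      case True
      have "inj_on (\<lambda>(a, b, c). (a, c)) (plane w v)"
        unfolding inj_on_def plane_def using True w1 w by auto
      then show ?thesis
        by (intro exI[of _ "\<lambda>(a, b, c). (a, c)"]) (auto simp: plane_def grid_def)
    next
      case False
      have "inj_on (\<lambda>(a, b, c). (a, b)) (plane w v)"
        unfolding inj_on_def plane_def using False w1 w \<open>w \<noteq> dzero\<close> by auto
      then show ?thesis
        by (intro exI[of _ "\<lambda>(a, b, c). (a, b)"]) (auto simp: plane_def grid_def)
    qed
  qed
  then have "card (plane w v) \<le> card ({..<n} \<times> {..<n})"
    by (meson card_inj_on_le finite_SigmaI finite_lessThan)
  then show ?thesis
    by (simp add: card_cartesian_product power2_eq_square)
qed

lemma dline_subset_plane: "\<not> ddot e w \<Longrightarrow> y \<in> grid \<Longrightarrow> dline e y \<subseteq> plane w (dot w y)"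
  unfolding dline_def plane_def by (auto simp: padd_grid smul_grid dot_padd dot_smul)

end

section \<open>Greedy covering of the conflicts by disjoint subcubes\<close>

lemma card_heavy_disjoint_le:
  fixes b :: real
  assumes "finite I" "finite P" "\<forall>i\<in>I. A i \<subseteq> P"
    and "\<forall>i\<in>I. \<forall>j\<in>I. i \<noteq> j \<longrightarrow> A i \<inter> A j = {}"
    and "\<forall>i\<in>I. real (card (U \<inter> A i)) > b"
  shows "real (card I) * b \<le> real (card (U \<inter> P))"
proof -
  have fin: "\<forall>i\<in>I. finite (U \<inter> A i)"
    using assms(2,3) by (meson finite_Int finite_subset)
  have "(\<Sum>i\<in>I. card (U \<inter> A i)) = card (\<Union>i\<in>I. U \<inter> A i)"
    using assms(1,4) fin by (intro card_UN_disjoint[symmetric]) auto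
  also have "\<dots> \<le> card (U \<inter> P)"
    using assms(2,3) by (intro card_mono) auto
  finally have "(\<Sum>i\<in>I. real (card (U \<inter> A i))) \<le> real (card (U \<inter> P))"
    by (metis of_nat_le_iff of_nat_sum)
  moreover have "real (card I) * b \<le> (\<Sum>i\<in>I. real (card (U \<inter> A i)))"
    using assms(5) sum_bounded_below[of I b "\<lambda>i. real (card (U \<inter> A i))"] by force
  ultimately show ?thesis
    by linarith
qed

lemma card_meeting_le:
  assumes "pairwise disjnt F" "finite B"
  shows "card {Q \<in> F. Q \<inter> B \<noteq> {}} \<le> card B"
proof -
  let ?S = "{Q \<in> F. Q \<inter> B \<noteq> {}}"
  let ?g = "\<lambda>Q. SOME x. x \<in> Q \<inter> B"
  have g: "?g Q \<in> Q \<inter> B" if "Q \<in> ?S" for Q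
    using that some_in_eq[of "Q \<inter> B"] by auto
  have "inj_on ?g ?S"
  proof (rule inj_onI)
    fix Q1 Q2 assume Q: "Q1 \<in> ?S" "Q2 \<in> ?S" "?g Q1 = ?g Q2"
    then have "\<not> disjnt Q1 Q2"
      using g[OF Q(1)] g[OF Q(2)] by (auto simp: disjnt_def)
    then show "Q1 = Q2"
      using assms(1) Q(1,2) by (auto simp: pairwise_def)
  qed
  moreover have "?g ` ?S \<subseteq> B"
    using g by blast
  ultimately show ?thesis
    using assms(2) by (rule card_inj_on_le)
qed

text \<open>The hypothesis forces \<open>7\<epsilon> < 1\<close> and \<open>21\<theta> < \<epsilon>\<close> (as \<open>\<alpha> < 1\<close>); these absorb the additive constants.\<close>
lemma budget_arith:
  fixes N \<alpha> \<kappa> \<theta> \<epsilon> b1 b2 b3 :: real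
  assumes N: "N > 0" and e3: "\<epsilon> * N \<ge> 3" and th: "\<theta> > 0" and K1: "\<kappa> * N \<ge> 1" and a1: "\<alpha> < 1"
    and ineq: "\<alpha> * N - 21 * \<kappa> * N - 7 * \<epsilon> * N - (84 * \<kappa> / \<epsilon>) * N - (21 * \<theta> / \<epsilon>) * N
                 - (80 * \<kappa> / \<theta>) * N - 28 > 0"
    and B1: "b1 \<le> 7 * (\<epsilon> * N + 8 + 8 * (\<kappa> * N))"
    and B2: "b2 \<le> 21 * ((\<theta> * N\<^sup>2 + 8 + 8 * (\<kappa> * N\<^sup>2)) / (\<epsilon> * N))"
    and B3: "b3 \<le> 7 * ((8 * (\<kappa> * N ^ 3)) / (\<theta> * N\<^sup>2))"
  shows "b1 + b2 + b3 < \<alpha> * N"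
proof -
  have ep: "\<epsilon> > 0"
    using e3 N by (smt (verit) mult_nonpos_nonneg)
  define K where "K = \<kappa> * N"
  define x1 where "x1 = K / \<epsilon>"
  define x2 where "x2 = K / \<theta>"
  define x3 where "x3 = \<theta> * N / \<epsilon>"
  have K0: "K \<ge> 1" and x0: "x1 \<ge> 0" "x2 \<ge> 0" "x3 \<ge> 0"
    using K1 ep th N by (simp_all add: K_def x1_def x2_def x3_def)
  have ineq': "\<alpha> * N - 21 * K - 7 * (\<epsilon> * N) - 84 * x1 - 21 * x3 - 80 * x2 - 28 > 0"
    using ineq unfolding K_def x1_def x2_def x3_def by (simp add: algebra_simps)
  moreover have "\<alpha> * N < N"
    using a1 N by simp
  ultimately have "21 * x3 < N" "7 * (\<epsilon> * N) < N"
    using K0 x0 ep N by (smt (verit) mult_pos_pos)+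
  then have t1: "21 * \<theta> < \<epsilon>" and t2: "7 * \<epsilon> < 1"
    using N ep unfolding x3_def by (simp_all add: field_simps)
  have "x2 \<ge> 21 * x1"
    using t1 K0 ep th unfolding x1_def x2_def by (simp add: field_simps)
  moreover have "x1 \<ge> 7 * K"
    using t2 K0 ep unfolding x1_def by (simp add: field_simps)
  moreover have "8 / (\<epsilon> * N) \<le> 8 / 3"
    using e3 ep N by (simp add: divide_le_eq mult.commute)
  moreover have "(\<theta> * N\<^sup>2 + 8 + 8 * (\<kappa> * N\<^sup>2)) / (\<epsilon> * N) = x3 + 8 / (\<epsilon> * N) + 8 * x1"
    unfolding x3_def x1_def K_def using N ep by (simp add: field_simps power2_eq_square)
  moreover have "(8 * (\<kappa> * N ^ 3)) / (\<theta> * N\<^sup>2) = 8 * x2"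
    unfolding x2_def K_def using N th by (simp add: field_simps power2_eq_square power3_eq_cube)
  ultimately show ?thesis
    using B1 B2 B3 ineq' K0 unfolding K_def[symmetric] by argo
qed

locale greedy_cover = boolean_grid +
  fixes C :: "point set" and ok :: "point set \<Rightarrow> bool" and \<alpha> \<kappa> \<theta> \<epsilon> :: real
  assumes C_grid: "C \<subseteq> grid"
    and C_ne: "C \<noteq> {}"
    and card_C_dline: "e \<noteq> dzero \<Longrightarrow> p \<in> grid \<Longrightarrow> real (card (C \<inter> dline e p)) \<le> \<kappa> * n"
    and card_ok_shifts: "p \<in> C \<Longrightarrow> real (card {d. d < n \<and> d \<noteq> 0 \<and> ok (subcube p d)}) \<ge> \<alpha> * n"
    and eps: "\<epsilon> * n \<ge> 3"
    and theta_pos: "\<theta> > 0"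
    and budget: "\<alpha> * n - 21 * \<kappa> * n - 7 * \<epsilon> * n - (84 * \<kappa> / \<epsilon>) * n
                 - (21 * \<theta> / \<epsilon>) * n - (80 * \<kappa> / \<theta>) * n - 28 > 0"
begin

lemma finite_C [simp]: "finite C"
  using C_grid finite_grid finite_subset by blast

lemma kappa_n_ge_1: "\<kappa> * n \<ge> 1"
proof -
  obtain c where c: "c \<in> C"
    using C_ne by auto
  then have "c \<in> C \<inter> dline (True, False, False) c"
    using dline_self by blast
  then have "card (C \<inter> dline (True, False, False) c) > 0"
    by (subst card_gt_0_iff) auto
  then show ?thesis
    using card_C_dline[of "(True, False, False)" c] c C_grid by auto
qed

lemma alpha_lt_1: "\<alpha> < 1"
proof -
  obtain c where c: "c \<in> C"
    using C_ne by auto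
  have "card {d. d < n \<and> d \<noteq> 0 \<and> ok (subcube c d)} \<le> card ({..<n} - {0})"
    by (intro card_mono) auto
  also have "\<dots> = n - 1"
    using n_pos by simp
  finally have "\<alpha> * n \<le> real (n - 1)"
    using card_ok_shifts[OF c] by (meson of_nat_le_iff order_trans)
  moreover have "real (n - 1) < real n"
    using n_pos by simp
  ultimately have "\<alpha> * n < 1 * real n"
    by linarith
  then show ?thesis
    by (rule mult_right_less_imp_less) simp
qed

lemma eps_n_pos: "\<epsilon> * n > 0"
  using eps by linarith

lemma card_C_plane_le: "w \<noteq> dzero \<Longrightarrow> real (card (C \<inter> plane w v)) \<le> \<kappa> * n\<^sup>2"
proof -
  assume "w \<noteq> dzero"
  obtain e where e: "e \<noteq> dzero" "\<not> ddot e w"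
    using exists_orthogonal_dir[OF \<open>w \<noteq> dzero\<close>] by blast
  let ?P = "plane w v"
  have sub: "dline e y \<subseteq> ?P" if "y \<in> ?P" for y
  proof -
    have "y \<in> grid" "dot w y = v"
      using that by (simp_all add: plane_def)
    then show ?thesis
      using dline_subset_plane[OF e(2)] by blast
  qed
  \<comment> \<open>Double counting of the pairs \<open>(y, x)\<close> with \<open>y \<in> C \<inter> P\<close> and \<open>x \<in> dline e y\<close>.\<close>
  have "(\<Sum>y\<in>C \<inter> ?P. card (dline e y)) = (\<Sum>y\<in>C \<inter> ?P. \<Sum>x\<in>?P. if x \<in> dline e y then 1 else 0)"
  proof (rule sum.cong[OF refl])
    fix y assume "y \<in> C \<inter> ?P"
    then have "card (dline e y) = card {x \<in> ?P. x \<in> dline e y}"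
      using sub[of y] by (intro arg_cong[where f = card]) auto
    then show "card (dline e y) = (\<Sum>x\<in>?P. if x \<in> dline e y then 1 else 0)"
      by (simp add: sum.If_cases Int_def)
  qed
  also have "\<dots> = (\<Sum>x\<in>?P. \<Sum>y\<in>C \<inter> ?P. if x \<in> dline e y then 1 else 0)"
    by (rule sum.swap)
  also have "\<dots> = (\<Sum>x\<in>?P. card {y \<in> C \<inter> ?P. x \<in> dline e y})"
    by (rule sum.cong[OF refl]) (simp add: sum.If_cases Int_def)
  also have "\<dots> \<le> (\<Sum>x\<in>?P. card (C \<inter> dline e x))"
    by (intro sum_mono card_mono) (auto intro: dline_sym)
  finally have "real (\<Sum>y\<in>C \<inter> ?P. card (dline e y)) \<le> (\<Sum>x\<in>?P. real (card (C \<inter> dline e x)))"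
    by (metis of_nat_le_iff of_nat_sum)
  moreover have "(\<Sum>y\<in>C \<inter> ?P. card (dline e y)) = card (C \<inter> ?P) * n"
    using card_dline[OF e(1)] by simp
  ultimately have "real (card (C \<inter> ?P)) * n \<le> (\<Sum>x\<in>?P. real (card (C \<inter> dline e x)))"
    by simp
  also have "\<dots> \<le> real (card ?P) * (\<kappa> * n)"
    using card_C_dline[OF e(1)] by (intro sum_bounded_above) (simp add: plane_def)
  also have "\<dots> \<le> real (n\<^sup>2) * (\<kappa> * n)"
    using card_plane_le[OF \<open>w \<noteq> dzero\<close>] kappa_n_ge_1 by (intro mult_right_mono) auto
  finally have "real (card (C \<inter> ?P)) * n \<le> (\<kappa> * n\<^sup>2) * n"
    by (simp add: algebra_simps)
  then show ?thesis
    using n_pos by simp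
qed

lemma card_C_le: "real (card C) \<le> \<kappa> * n ^ 3"
proof -
  let ?w = "(True, False, False)"
  have "C \<subseteq> (\<Union>v<n. C \<inter> plane ?w v)"
  proof
    fix p assume "p \<in> C"
    then have "p \<in> grid"
      using C_grid by blast
    then show "p \<in> (\<Union>v<n. C \<inter> plane ?w v)"
      using \<open>p \<in> C\<close> dot_less by (simp add: plane_def)
  qed
  then have "card C \<le> (\<Sum>v<n. card (C \<inter> plane ?w v))"
    using card_mono[OF _ \<open>C \<subseteq> _\<close>] card_UN_le[of "{..<n}" "\<lambda>v. C \<inter> plane ?w v"]
    by (simp add: order_trans)
  then have "real (card C) \<le> (\<Sum>v<n. real (card (C \<inter> plane ?w v)))"
    by (metis of_nat_le_iff of_nat_sum)
  also have "\<dots> \<le> (\<Sum>v<n. \<kappa> * n\<^sup>2)"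
    by (intro sum_mono card_C_plane_le) simp
  also have "\<dots> = \<kappa> * n ^ 3"
    by (simp add: power2_eq_square power3_eq_cube)
  finally show ?thesis .
qed

definition admissible :: "point set \<Rightarrow> bool" where
  "admissible Q \<longleftrightarrow> (\<exists>p\<in>grid. \<exists>d<n. d \<noteq> 0 \<and> Q = subcube p d \<and> ok Q)"

definition conflict_cubes :: "point set set \<Rightarrow> point set \<Rightarrow> nat" where
  "conflict_cubes F Y = card {Q \<in> F. Q \<inter> (Y \<inter> C) \<noteq> {}}"

text \<open>The invariant of the greedy construction: a cube is charged to a line or plane only if it
  covers a conflict there, or if the line or plane was still light (at most \<open>\<epsilon>n\<close>, resp. \<open>\<theta>n\<^sup>2\<close>,
  covered points) when the cube was chosen.\<close>
definition balanced :: "point set set \<Rightarrow> bool" where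
  "balanced F \<longleftrightarrow>
     (\<forall>e p. e \<noteq> dzero \<longrightarrow> p \<in> grid \<longrightarrow>
        real (card (\<Union>F \<inter> dline e p)) \<le> \<epsilon> * n + 8 + 8 * real (conflict_cubes F (dline e p))) \<and>
     (\<forall>w v. w \<noteq> dzero \<longrightarrow>
        real (card (\<Union>F \<inter> plane w v)) \<le> \<theta> * n\<^sup>2 + 8 + 8 * real (conflict_cubes F (plane w v)))"

definition greedy_state :: "point set set \<Rightarrow> bool" where
  "greedy_state F \<longleftrightarrow>
     finite F \<and> pairwise disjnt F \<and> (\<forall>Q\<in>F. admissible Q) \<and> balanced F \<and> card F \<le> card C"

lemma admissible_subcube: "admissible Q \<Longrightarrow> Q \<subseteq> grid \<and> card Q \<le> 8 \<and> finite Q"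
  unfolding admissible_def using subcube_subset_grid card_subcube_le by auto

lemma conflict_cubes_le: "pairwise disjnt F \<Longrightarrow> conflict_cubes F Y \<le> card (C \<inter> Y)"
  unfolding conflict_cubes_def using card_meeting_le[of F "Y \<inter> C"] by (simp add: Int_commute)

lemma balanced_bound_insert:
  fixes T :: real
  assumes fin: "finite F" and new: "Q \<notin> F" "finite Q" "card Q \<le> 8"
    and old: "real (card (\<Union>F \<inter> Y)) \<le> T + 8 + 8 * real (conflict_cubes F Y)"
    and light: "Q \<inter> Y \<noteq> {} \<Longrightarrow> Q \<inter> (Y \<inter> C) = {} \<Longrightarrow> real (card (\<Union>F \<inter> Y)) \<le> T"
  shows "real (card (\<Union>(insert Q F) \<inter> Y)) \<le> T + 8 + 8 * real (conflict_cubes (insert Q F) Y)"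
proof -
  have "\<Union>(insert Q F) \<inter> Y = (Q \<inter> Y) \<union> (\<Union>F \<inter> Y)"
    by auto
  then have grow: "card (\<Union>(insert Q F) \<inter> Y) \<le> card (Q \<inter> Y) + card (\<Union>F \<inter> Y)"
    using card_Un_le[of "Q \<inter> Y" "\<Union>F \<inter> Y"] by simp
  have "card (Q \<inter> Y) \<le> card Q"
    using new(2) by (intro card_mono) auto
  then have small: "card (Q \<inter> Y) \<le> 8"
    using new(3) by linarith
  have mono: "conflict_cubes F Y \<le> conflict_cubes (insert Q F) Y"
    unfolding conflict_cubes_def using fin by (intro card_mono) auto
  consider "Q \<inter> Y = {}" | "Q \<inter> Y \<noteq> {}" "Q \<inter> (Y \<inter> C) = {}" | "Q \<inter> (Y \<inter> C) \<noteq> {}"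
    by blast
  then show ?thesis
  proof cases
    case 1
    then have "\<Union>(insert Q F) \<inter> Y = \<Union>F \<inter> Y"
      by auto
    then show ?thesis
      using old mono by simp
  next
    case 2
    then show ?thesis
      using light grow small by simp
  next
    case 3
    then have "{Q' \<in> insert Q F. Q' \<inter> (Y \<inter> C) \<noteq> {}} = insert Q {Q' \<in> F. Q' \<inter> (Y \<inter> C) \<noteq> {}}"
      by auto
    then have "conflict_cubes (insert Q F) Y = conflict_cubes F Y + 1"
      unfolding conflict_cubes_def using fin new(1) by simp
    then show ?thesis
      using old grow small by simp
  qed
qed

lemma greedy_state_Union: "greedy_state F \<Longrightarrow> finite (\<Union>F) \<and> \<Union>F \<subseteq> grid"
  unfolding greedy_state_def using admissible_subcube by blast

lemma card_Union_le: "greedy_state F \<Longrightarrow> real (card (\<Union>F)) \<le> 8 * (\<kappa> * n ^ 3)"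
proof -
  assume "greedy_state F"
  then have "finite F" "\<forall>Q\<in>F. admissible Q" "card F \<le> card C"
    unfolding greedy_state_def by auto
  have "card (\<Union>F) \<le> sum card F"
    by (rule card_Union_le_sum_card)
  also have "\<dots> \<le> card F * 8"
    using \<open>\<forall>Q\<in>F. admissible Q\<close> admissible_subcube sum_bounded_above[of F card 8] by force
  also have "\<dots> \<le> card C * 8"
    using \<open>card F \<le> card C\<close> by simp
  finally have "real (card (\<Union>F)) \<le> real (card C) * 8"
    by (metis of_nat_le_iff of_nat_mult of_nat_numeral)
  then show ?thesis
    using card_C_le by linarith
qed

lemma card_Union_dline_le:
  assumes "greedy_state F" "e \<noteq> dzero" "p \<in> grid"
  shows "real (card (\<Union>F \<inter> dline e p)) \<le> \<epsilon> * n + 8 + 8 * (\<kappa> * n)"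
proof -
  have "real (card (\<Union>F \<inter> dline e p)) \<le> \<epsilon> * n + 8 + 8 * real (conflict_cubes F (dline e p))"
    using assms unfolding greedy_state_def balanced_def by blast
  moreover have "real (conflict_cubes F (dline e p)) \<le> real (card (C \<inter> dline e p))"
    using assms(1) conflict_cubes_le unfolding greedy_state_def by (simp add: of_nat_le_iff)
  ultimately show ?thesis
    using card_C_dline[OF assms(2,3)] by linarith
qed

lemma card_Union_plane_le:
  assumes "greedy_state F" "w \<noteq> dzero"
  shows "real (card (\<Union>F \<inter> plane w v)) \<le> \<theta> * n\<^sup>2 + 8 + 8 * (\<kappa> * n\<^sup>2)"
proof -
  have "real (card (\<Union>F \<inter> plane w v)) \<le> \<theta> * n\<^sup>2 + 8 + 8 * real (conflict_cubes F (plane w v))"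
    using assms unfolding greedy_state_def balanced_def by blast
  moreover have "real (conflict_cubes F (plane w v)) \<le> real (card (C \<inter> plane w v))"
    using assms(1) conflict_cubes_le unfolding greedy_state_def by (simp add: of_nat_le_iff)
  ultimately show ?thesis
    using card_C_plane_le[OF assms(2), of v] by linarith
qed

text \<open>Lines and planes through \<open>c\<close> are exempt: there the new cube is charged to the conflict \<open>c\<close>.\<close>
definition overlap_shifts :: "point set set \<Rightarrow> point \<Rightarrow> nat set" where
  "overlap_shifts F c = {d. d < n \<and> subcube c d \<inter> \<Union>F \<noteq> {}}"

definition heavy_line_shifts :: "point set set \<Rightarrow> point \<Rightarrow> nat set" where
  "heavy_line_shifts F c = {d. d < n \<and> (\<exists>e f. e \<noteq> dzero \<and> padd c (smul f d) \<notin> dline e c \<and>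
       real (card (\<Union>F \<inter> dline e (padd c (smul f d)))) > \<epsilon> * n)}"

definition heavy_plane_shifts :: "point set set \<Rightarrow> point \<Rightarrow> nat set" where
  "heavy_plane_shifts F c = {d. d < n \<and> (\<exists>w f. w \<noteq> dzero \<and> dot w (padd c (smul f d)) \<noteq> dot w c \<and>
       real (card (\<Union>F \<inter> plane w (dot w (padd c (smul f d))))) > \<theta> * n\<^sup>2)}"

lemma card_overlap_shifts_le:
  assumes st: "greedy_state F" and c: "c \<in> grid" "c \<notin> \<Union>F"
  shows "real (card (overlap_shifts F c)) \<le> 7 * (\<epsilon> * n + 8 + 8 * (\<kappa> * n))"
proof -
  let ?U = "\<Union>F"
  let ?D = "\<lambda>f. {d. d < n \<and> padd c (smul f d) \<in> ?U}"
  have fU: "finite ?U"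
    using greedy_state_Union[OF st] by blast
  have sub: "overlap_shifts F c \<subseteq> (\<Union>f\<in>nonzero_dirs. ?D f)"
  proof
    fix d assume "d \<in> overlap_shifts F c"
    then obtain q where d: "d < n" "q \<in> subcube c d" "q \<in> ?U"
      unfolding overlap_shifts_def by blast
    then obtain f where q: "q = padd c (smul f d)"
      using subcube_mem_iff by blast
    then have "f \<noteq> dzero"
      using d c(2) by auto
    then show "d \<in> (\<Union>f\<in>nonzero_dirs. ?D f)"
      using d q by auto
  qed
  have each: "real (card (?D f)) \<le> \<epsilon> * n + 8 + 8 * (\<kappa> * n)" if f: "f \<noteq> dzero" for f
  proof -
    have "inj_on (\<lambda>d. padd c (smul f d)) (?D f)"
      using f by (auto simp: inj_on_def smul_inj_iff)
    moreover have "(\<lambda>d. padd c (smul f d)) ` ?D f \<subseteq> ?U \<inter> dline f c"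
      unfolding dline_def by auto
    moreover have "finite (?U \<inter> dline f c)"
      using fU by simp
    ultimately have "card (?D f) \<le> card (?U \<inter> dline f c)"
      by (rule card_inj_on_le)
    then show ?thesis
      using card_Union_dline_le[OF st f c(1)] by linarith
  qed
  have "card (overlap_shifts F c) \<le> card (\<Union>f\<in>nonzero_dirs. ?D f)"
    using sub by (intro card_mono) auto
  also have "\<dots> \<le> (\<Sum>f\<in>nonzero_dirs. card (?D f))"
    by (rule card_UN_le) simp
  finally have "real (card (overlap_shifts F c)) \<le> real (\<Sum>f\<in>nonzero_dirs. card (?D f))"
    by (simp only: of_nat_le_iff)
  also have "\<dots> = (\<Sum>f\<in>nonzero_dirs. real (card (?D f)))"
    by (simp only: of_nat_sum)
  also have "\<dots> \<le> real (card nonzero_dirs) * (\<epsilon> * n + 8 + 8 * (\<kappa> * n))"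
    using each by (intro sum_bounded_above) simp
  finally show ?thesis
    by (simp add: card_nonzero_dirs)
qed

text \<open>For \<open>w = e \<times> f\<close>, the lines \<open>dline e (c + f \<otimes> d)\<close> are pairwise disjoint and lie in
  the plane through \<open>c\<close> orthogonal to \<open>w\<close>, so few of them are heavy.\<close>
lemma card_heavy_line_shifts_dir_le:
  assumes st: "greedy_state F" and c: "c \<in> grid" and e: "e \<noteq> dzero" and f: "f \<in> reduced_dirs e"
  shows "real (card {d. d < n \<and> real (card (\<Union>F \<inter> dline e (padd c (smul f d)))) > \<epsilon> * n})
           \<le> (\<theta> * n\<^sup>2 + 8 + 8 * (\<kappa> * n\<^sup>2)) / (\<epsilon> * n)"
proof -
  let ?I = "{d. d < n \<and> real (card (\<Union>F \<inter> dline e (padd c (smul f d)))) > \<epsilon> * n}"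
  let ?A = "\<lambda>d. dline e (padd c (smul f d))"
  have fz: "f \<noteq> dzero" and fe: "f \<noteq> e"
    using reduced_dirs_ne[OF f e] by auto
  define w where "w = dcross e f"
  have w: "w \<noteq> dzero" "\<not> ddot e w" "\<not> ddot f w"
    using dcross_orthogonal[OF e fz fe] w_def by auto
  let ?P = "plane w (dot w c)"
  have fin: "finite ?I"
    by (rule finite_subset[of _ "{..<n}"]) auto
  have sub: "\<forall>d\<in>?I. ?A d \<subseteq> ?P"
  proof
    fix d assume "d \<in> ?I"
    have "padd c (smul f d) \<in> grid" "dot w (padd c (smul f d)) = dot w c"
      using \<open>d \<in> ?I\<close> c w(3) by (simp_all add: padd_grid smul_grid dot_padd dot_smul)
    then show "?A d \<subseteq> ?P"
      using dline_subset_plane[OF w(2), of "padd c (smul f d)"] by simp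
  qed
  have disj: "\<forall>d\<in>?I. \<forall>d'\<in>?I. d \<noteq> d' \<longrightarrow> ?A d \<inter> ?A d' = {}"
  proof (intro ballI impI, rule ccontr)
    fix d d' assume "d \<in> ?I" "d' \<in> ?I" "d \<noteq> d'"
    assume "?A d \<inter> ?A d' \<noteq> {}"
    then have "?A d' = ?A d"
      using dline_eq_or_disjoint by blast
    then have "padd c (smul f d') \<in> ?A d"
      using dline_self by metis
    then obtain g where "padd c (smul f d') = padd (padd c (smul f d)) (smul e g)"
      by (auto simp: dline_mem_iff)
    then have "smul f (d XOR d') = smul e g"
      by (simp add: padd_assoc smul_xor)
    then have "d XOR d' = 0"
      using smul_eq_smul_diff fe fz by blast
    then show False
      using \<open>d \<noteq> d'\<close> by simp
  qed
  have heavy: "\<forall>d\<in>?I. real (card (\<Union>F \<inter> ?A d)) > \<epsilon> * n"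
    by simp
  have "real (card ?I) * (\<epsilon> * n) \<le> real (card (\<Union>F \<inter> ?P))"
    using card_heavy_disjoint_le[OF fin finite_plane sub disj heavy] .
  also have "\<dots> \<le> \<theta> * n\<^sup>2 + 8 + 8 * (\<kappa> * n\<^sup>2)"
    using card_Union_plane_le[OF st w(1)] .
  finally show ?thesis
    using eps_n_pos by (simp add: pos_le_divide_eq)
qed

lemma card_heavy_line_shifts_le:
  assumes st: "greedy_state F" and c: "c \<in> grid"
  shows "real (card (heavy_line_shifts F c)) \<le> 21 * ((\<theta> * n\<^sup>2 + 8 + 8 * (\<kappa> * n\<^sup>2)) / (\<epsilon> * n))"
proof -
  let ?X = "(\<theta> * n\<^sup>2 + 8 + 8 * (\<kappa> * n\<^sup>2)) / (\<epsilon> * n)"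
  let ?I = "\<lambda>e f. {d. d < n \<and> real (card (\<Union>F \<inter> dline e (padd c (smul f d)))) > \<epsilon> * n}"
  have sub: "heavy_line_shifts F c \<subseteq> (\<Union>e\<in>nonzero_dirs. \<Union>f\<in>reduced_dirs e. ?I e f)"
  proof
    fix d assume "d \<in> heavy_line_shifts F c"
    then obtain e f where d: "d < n" "e \<noteq> dzero" "padd c (smul f d) \<notin> dline e c"
      "real (card (\<Union>F \<inter> dline e (padd c (smul f d)))) > \<epsilon> * n"
      unfolding heavy_line_shifts_def by blast
    have "f \<noteq> dzero" "f \<noteq> e"
      using d(1,3) dline_self by (auto simp: dline_mem_iff)
    \<comment> \<open>Replacing \<open>f\<close> by \<open>f + e\<close> does not change the line \<open>dline e (c + f \<otimes> d)\<close>.\<close>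
    then consider "f \<in> reduced_dirs e" | "dadd f e \<in> reduced_dirs e"
      using reduced_dirs_cover[OF d(2)] by blast
    then show "d \<in> (\<Union>e\<in>nonzero_dirs. \<Union>f\<in>reduced_dirs e. ?I e f)"
    proof cases
      case 1
      then show ?thesis
        using d by auto
    next
      case 2
      have "padd c (smul (dadd f e) d) = padd (padd c (smul f d)) (smul e d)"
        by (simp add: smul_dadd padd_assoc)
      then have "dline e (padd c (smul (dadd f e) d)) = dline e (padd c (smul f d))"
        using d(1) by (intro dline_eq_of_mem) (auto simp: dline_mem_iff)
      then have "d \<in> ?I e (dadd f e)"
        using d by simp
      then show ?thesis
        using d(2) 2 by auto
    qed
  qed
  have fin: "finite (?I e f)" for e f
    by (rule finite_subset[of _ "{..<n}"]) auto
  have "card (heavy_line_shifts F c) \<le> card (\<Union>e\<in>nonzero_dirs. \<Union>f\<in>reduced_dirs e. ?I e f)"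
    using sub fin by (intro card_mono) auto
  also have "\<dots> \<le> (\<Sum>e\<in>nonzero_dirs. card (\<Union>f\<in>reduced_dirs e. ?I e f))"
    by (rule card_UN_le) simp
  also have "\<dots> \<le> (\<Sum>e\<in>nonzero_dirs. \<Sum>f\<in>reduced_dirs e. card (?I e f))"
    by (intro sum_mono card_UN_le) (simp add: reduced_dirs_def)
  finally have "real (card (heavy_line_shifts F c)) \<le> real (\<Sum>e\<in>nonzero_dirs. \<Sum>f\<in>reduced_dirs e. card (?I e f))"
    by (simp only: of_nat_le_iff)
  also have "\<dots> = (\<Sum>e\<in>nonzero_dirs. \<Sum>f\<in>reduced_dirs e. real (card (?I e f)))"
    by (simp only: of_nat_sum)
  also have "\<dots> \<le> (\<Sum>e\<in>nonzero_dirs. \<Sum>f\<in>reduced_dirs e. ?X)"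
    using card_heavy_line_shifts_dir_le[OF st c] by (intro sum_mono) auto
  also have "\<dots> = 21 * ?X"
    by (simp add: card_nonzero_dirs card_reduced_dirs)
  finally show ?thesis .
qed

lemma card_heavy_planes_le:
  assumes st: "greedy_state F"
  shows "real (card {v. v < n \<and> real (card (\<Union>F \<inter> plane w v)) > \<theta> * n\<^sup>2}) \<le> 8 * (\<kappa> * n ^ 3) / (\<theta> * n\<^sup>2)"
proof -
  let ?I = "{v. v < n \<and> real (card (\<Union>F \<inter> plane w v)) > \<theta> * n\<^sup>2}"
  have fin: "finite ?I"
    by (rule finite_subset[of _ "{..<n}"]) auto
  have sub: "\<forall>v\<in>?I. plane w v \<subseteq> grid" and disj: "\<forall>v\<in>?I. \<forall>v'\<in>?I. v \<noteq> v' \<longrightarrow> plane w v \<inter> plane w v' = {}"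
    and heavy: "\<forall>v\<in>?I. real (card (\<Union>F \<inter> plane w v)) > \<theta> * n\<^sup>2"
    unfolding plane_def by auto
  have "real (card ?I) * (\<theta> * n\<^sup>2) \<le> real (card (\<Union>F \<inter> grid))"
    using card_heavy_disjoint_le[OF fin finite_grid sub disj heavy] .
  also have "\<dots> = real (card (\<Union>F))"
    using greedy_state_Union[OF st] by (simp add: Int_absorb2)
  also have "\<dots> \<le> 8 * (\<kappa> * n ^ 3)"
    using card_Union_le[OF st] .
  finally show ?thesis
    using theta_pos n_pos by (simp add: pos_le_divide_eq)
qed

lemma card_heavy_plane_shifts_le:
  assumes st: "greedy_state F" and c: "c \<in> grid"
  shows "real (card (heavy_plane_shifts F c)) \<le> 7 * (8 * (\<kappa> * n ^ 3) / (\<theta> * n\<^sup>2))"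
proof -
  let ?H = "\<lambda>w. {v. v < n \<and> real (card (\<Union>F \<inter> plane w v)) > \<theta> * n\<^sup>2}"
  have sub: "heavy_plane_shifts F c \<subseteq> (\<Union>w\<in>nonzero_dirs. (\<lambda>v. dot w c XOR v) ` ?H w)"
  proof
    fix d assume "d \<in> heavy_plane_shifts F c"
    then obtain w f where d: "d < n" "w \<noteq> dzero" "dot w (padd c (smul f d)) \<noteq> dot w c"
      "real (card (\<Union>F \<inter> plane w (dot w (padd c (smul f d))))) > \<theta> * n\<^sup>2"
      unfolding heavy_plane_shifts_def by blast
    have "dot w (padd c (smul f d)) = dot w c XOR (if ddot f w then d else 0)"
      by (simp add: dot_padd dot_smul)
    then have v: "dot w (padd c (smul f d)) = dot w c XOR d"
      using d(3) by (cases "ddot f w") auto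
    have "dot w c XOR d < n"
      using dot_less[OF c] d(1) xor_less by blast
    then have "dot w c XOR d \<in> ?H w"
      using d(4) v by simp
    then have "d \<in> (\<lambda>v. dot w c XOR v) ` ?H w"
      by (intro image_eqI[where x = "dot w c XOR d"]) simp_all
    then show "d \<in> (\<Union>w\<in>nonzero_dirs. (\<lambda>v. dot w c XOR v) ` ?H w)"
      using d(2) by (intro UN_I[of w]) simp_all
  qed
  have fin: "finite (?H w)" for w
    by (rule finite_subset[of _ "{..<n}"]) auto
  have "card (heavy_plane_shifts F c) \<le> card (\<Union>w\<in>nonzero_dirs. (\<lambda>v. dot w c XOR v) ` ?H w)"
    using sub fin by (intro card_mono) auto
  also have "\<dots> \<le> (\<Sum>w\<in>nonzero_dirs. card ((\<lambda>v. dot w c XOR v) ` ?H w))"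
    by (rule card_UN_le) simp
  also have "\<dots> \<le> (\<Sum>w\<in>nonzero_dirs. card (?H w))"
    by (intro sum_mono card_image_le fin)
  finally have "real (card (heavy_plane_shifts F c)) \<le> real (\<Sum>w\<in>nonzero_dirs. card (?H w))"
    by (simp only: of_nat_le_iff)
  also have "\<dots> = (\<Sum>w\<in>nonzero_dirs. real (card (?H w)))"
    by (simp only: of_nat_sum)
  also have "\<dots> \<le> real (card nonzero_dirs) * (8 * (\<kappa> * n ^ 3) / (\<theta> * n\<^sup>2))"
    using card_heavy_planes_le[OF st] by (intro sum_bounded_above)
  finally show ?thesis
    by (simp add: card_nonzero_dirs)
qed

lemma exists_free_shift:
  assumes st: "greedy_state F" and c: "c \<in> C" "c \<notin> \<Union>F"
  shows "\<exists>d<n. d \<noteq> 0 \<and> ok (subcube c d) \<and>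
           d \<notin> overlap_shifts F c \<union> heavy_line_shifts F c \<union> heavy_plane_shifts F c"
proof (rule ccontr)
  let ?OK = "{d. d < n \<and> d \<noteq> 0 \<and> ok (subcube c d)}"
  let ?B = "overlap_shifts F c \<union> heavy_line_shifts F c \<union> heavy_plane_shifts F c"
  have cV: "c \<in> grid"
    using c C_grid by blast
  assume "\<not> ?thesis"
  then have "?OK \<subseteq> ?B"
    by blast
  moreover have "finite ?B"
    unfolding overlap_shifts_def heavy_line_shifts_def heavy_plane_shifts_def
    by (rule finite_subset[of _ "{..<n}"]) auto
  ultimately have "card ?OK \<le> card ?B"
    by (rule card_mono[rotated])
  also have "\<dots> \<le> card (overlap_shifts F c \<union> heavy_line_shifts F c) + card (heavy_plane_shifts F c)"
    by (rule card_Un_le)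
  also have "\<dots> \<le> card (overlap_shifts F c) + card (heavy_line_shifts F c) + card (heavy_plane_shifts F c)"
    using card_Un_le[of "overlap_shifts F c" "heavy_line_shifts F c"] by linarith
  finally have "real (card ?OK) \<le>
      real (card (overlap_shifts F c)) + real (card (heavy_line_shifts F c)) + real (card (heavy_plane_shifts F c))"
    by simp
  also have "\<dots> < \<alpha> * n"
    using budget_arith[OF _ eps theta_pos kappa_n_ge_1 alpha_lt_1 budget
        card_overlap_shifts_le[OF st cV c(2)] card_heavy_line_shifts_le[OF st cV, unfolded of_nat_power]
        card_heavy_plane_shifts_le[OF st cV, unfolded of_nat_power]] n_pos
    by simp
  finally show False
    using card_ok_shifts[OF c(1)] by linarith
qed

lemma light_dline_of_free_shift:
  assumes d: "d < n" "d \<notin> heavy_line_shifts F c" and e: "e \<noteq> dzero"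
    and meets: "subcube c d \<inter> dline e p \<noteq> {}" and c: "c \<notin> dline e p"
  shows "real (card (\<Union>F \<inter> dline e p)) \<le> \<epsilon> * n"
proof -
  obtain q where q: "q \<in> subcube c d" "q \<in> dline e p"
    using meets by blast
  then obtain f where qf: "q = padd c (smul f d)"
    using subcube_mem_iff by blast
  have Y: "dline e q = dline e p"
    using q(2) by (rule dline_eq_of_mem)
  then have "q \<notin> dline e c"
    using c dline_eq_of_mem dline_self by metis
  then have "\<not> real (card (\<Union>F \<inter> dline e q)) > \<epsilon> * n"
    using d e qf unfolding heavy_line_shifts_def by blast
  then show ?thesis
    using Y by simp
qed

lemma light_plane_of_free_shift:
  assumes d: "d < n" "d \<notin> heavy_plane_shifts F c" and w: "w \<noteq> dzero" and c: "c \<in> grid"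
    and meets: "subcube c d \<inter> plane w v \<noteq> {}" and c_notin: "c \<notin> plane w v"
  shows "real (card (\<Union>F \<inter> plane w v)) \<le> \<theta> * n\<^sup>2"
proof -
  obtain q where q: "q \<in> subcube c d" "q \<in> plane w v"
    using meets by blast
  then obtain f where qf: "q = padd c (smul f d)"
    using subcube_mem_iff by blast
  have v: "dot w q = v"
    using q(2) unfolding plane_def by simp
  then have "dot w q \<noteq> dot w c"
    using c c_notin unfolding plane_def by auto
  then have "\<not> real (card (\<Union>F \<inter> plane w (dot w q))) > \<theta> * n\<^sup>2"
    using d w qf unfolding heavy_plane_shifts_def by blast
  then show ?thesis
    using v by simp
qed

lemma balanced_insert:
  assumes st: "greedy_state F" and c: "c \<in> C" "c \<notin> \<Union>F" and d: "d < n"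
    and light_lines: "d \<notin> heavy_line_shifts F c" and light_planes: "d \<notin> heavy_plane_shifts F c"
  shows "balanced (insert (subcube c d) F)"
proof -
  let ?Q = "subcube c d"
  have fF: "finite F" and bF: "balanced F"
    using st unfolding greedy_state_def by auto
  have QF: "?Q \<notin> F"
    using c(2) subcube_self[of c d] by blast
  have cQ: "c \<in> ?Q" "c \<in> grid"
    using subcube_self c(1) C_grid by auto
  note insert_bound = balanced_bound_insert[OF fF QF finite_subcube card_subcube_le]
  have lines: "real (card (\<Union>(insert ?Q F) \<inter> dline e p))
      \<le> \<epsilon> * n + 8 + 8 * real (conflict_cubes (insert ?Q F) (dline e p))"
    if e: "e \<noteq> dzero" and p: "p \<in> grid" for e p
  proof (rule insert_bound)
    show "real (card (\<Union>F \<inter> dline e p)) \<le> \<epsilon> * n + 8 + 8 * real (conflict_cubes F (dline e p))"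
      using bF e p unfolding balanced_def by blast
    show "real (card (\<Union>F \<inter> dline e p)) \<le> \<epsilon> * n"
      if "?Q \<inter> dline e p \<noteq> {}" "?Q \<inter> (dline e p \<inter> C) = {}"
      using light_dline_of_free_shift[OF d light_lines e that(1)] that(2) cQ(1) c(1) by blast
  qed
  have planes: "real (card (\<Union>(insert ?Q F) \<inter> plane w v))
      \<le> \<theta> * n\<^sup>2 + 8 + 8 * real (conflict_cubes (insert ?Q F) (plane w v))"
    if w: "w \<noteq> dzero" for w v
  proof (rule insert_bound)
    show "real (card (\<Union>F \<inter> plane w v)) \<le> \<theta> * n\<^sup>2 + 8 + 8 * real (conflict_cubes F (plane w v))"
      using bF w unfolding balanced_def by blast
    show "real (card (\<Union>F \<inter> plane w v)) \<le> \<theta> * n\<^sup>2"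
      if "?Q \<inter> plane w v \<noteq> {}" "?Q \<inter> (plane w v \<inter> C) = {}"
      using light_plane_of_free_shift[OF d light_planes w cQ(2) that(1)] that(2) cQ(1) c(1) by blast
  qed
  show ?thesis
    unfolding balanced_def using lines planes by blast
qed

lemma greedy_state_insert:
  assumes st: "greedy_state F" and cF: "card F < card C" and c: "c \<in> C" "c \<notin> \<Union>F"
  shows "\<exists>Q. c \<in> Q \<and> Q \<notin> F \<and> greedy_state (insert Q F)"
proof -
  obtain d where d: "d < n" "d \<noteq> 0" "ok (subcube c d)"
    and free: "d \<notin> overlap_shifts F c" "d \<notin> heavy_line_shifts F c" "d \<notin> heavy_plane_shifts F c"
    using exists_free_shift[OF st c] by blast
  let ?Q = "subcube c d"
  have QF: "?Q \<notin> F"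
    using c(2) subcube_self[of c d] by blast
  have "admissible ?Q"
    unfolding admissible_def using c(1) C_grid d by blast
  moreover have "pairwise disjnt (insert ?Q F)"
    using st free(1) d(1) unfolding greedy_state_def overlap_shifts_def pairwise_insert disjnt_def
    by blast
  moreover have "balanced (insert ?Q F)"
    using balanced_insert[OF st c d(1) free(2,3)] .
  moreover have "card (insert ?Q F) \<le> card C"
    using st QF cF unfolding greedy_state_def by simp
  ultimately have "greedy_state (insert ?Q F)"
    using st unfolding greedy_state_def by simp
  then show ?thesis
    using QF subcube_self[of c d] by blast
qed

lemma greedy_cover_subset:
  "finite D \<Longrightarrow> D \<subseteq> C \<Longrightarrow> \<exists>F. greedy_state F \<and> D \<subseteq> \<Union>F \<and> card F \<le> card D"
proof (induction D rule: finite_induct)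
  case empty
  have "greedy_state {}"
    unfolding greedy_state_def balanced_def conflict_cubes_def using eps_n_pos theta_pos by simp
  then show ?case
    by auto
next
  case (insert x D)
  then obtain F where F: "greedy_state F" "D \<subseteq> \<Union>F" "card F \<le> card D"
    by auto
  have "card (insert x D) = card D + 1"
    using insert by simp
  have "card (insert x D) \<le> card C"
    using insert.prems by (intro card_mono) simp_all
  show ?case
  proof (cases "x \<in> \<Union>F")
    case True
    then show ?thesis
      using F \<open>card (insert x D) = card D + 1\<close> by (intro exI[of _ F]) auto
  next
    case False
    obtain Q where "x \<in> Q" "Q \<notin> F" "greedy_state (insert Q F)"
      using greedy_state_insert[OF F(1) _ _ False] insert F(3) \<open>card (insert x D) \<le> card C\<close> by fastforce
    moreover have "card (insert Q F) = card F + 1"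
      using F(1) \<open>Q \<notin> F\<close> unfolding greedy_state_def by simp
    ultimately show ?thesis
      using F \<open>card (insert x D) = card D + 1\<close> by (intro exI[of _ "insert Q F"]) auto
  qed
qed

theorem exists_admissible_cover: "\<exists>F. (\<forall>Q\<in>F. admissible Q) \<and> pairwise disjnt F \<and> C \<subseteq> \<Union>F"
  using greedy_cover_subset[OF finite_C subset_refl] unfolding greedy_state_def by blast

end

section \<open>The Boolean Latin cube as the grid\<close>

definition coord :: "(nat \<Rightarrow> nat) \<Rightarrow> nat \<Rightarrow> nat" where
  "coord s i = s i - 1"

definition coord_inv :: "nat \<Rightarrow> (nat \<Rightarrow> nat) \<Rightarrow> nat \<Rightarrow> nat" where
  "coord_inv n s a = inv_into {1..n} s (Suc a)"

context
  fixes n :: nat and s :: "nat \<Rightarrow> nat"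
  assumes bij: "bij_betw s {1..n} {1..n}"
begin

lemma Suc_mem_image: "a < n \<Longrightarrow> Suc a \<in> s ` {1..n}"
  using bij_betw_imp_surj_on[OF bij] by auto

lemma coord_inv_mem: "a < n \<Longrightarrow> coord_inv n s a \<in> {1..n}"
  unfolding coord_inv_def by (rule inv_into_into[OF Suc_mem_image])

lemma coord_coord_inv [simp]: "a < n \<Longrightarrow> coord s (coord_inv n s a) = a"
  unfolding coord_def coord_inv_def using f_inv_into_f[OF Suc_mem_image] by simp

lemma coord_less: "i \<in> {1..n} \<Longrightarrow> coord s i < n"
  unfolding coord_def using bij_betw_apply[OF bij, of i] by auto

lemma coord_inv_coord [simp]: "i \<in> {1..n} \<Longrightarrow> coord_inv n s (coord s i) = i"
proof -
  assume i: "i \<in> {1..n}"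
  then have "Suc (coord s i) = s i"
    unfolding coord_def using bij_betw_apply[OF bij, of i] by auto
  then show ?thesis
    unfolding coord_inv_def using inv_into_f_f[OF bij_betw_imp_inj_on[OF bij] i] by simp
qed

lemma coord_inv_eq_iff:
  assumes "a < n" "a' < n"
  shows "coord_inv n s a = coord_inv n s a' \<longleftrightarrow> a = a'"
proof
  assume "coord_inv n s a = coord_inv n s a'"
  then have "coord s (coord_inv n s a) = coord s (coord_inv n s a')"
    by (rule arg_cong)
  then show "a = a'"
    by (simp only: coord_coord_inv assms)
qed simp

end

locale boolean_latin = boolean_grid +
  fixes \<sigma>1 \<sigma>2 \<sigma>3 \<tau> :: "nat \<Rightarrow> nat" and L :: "cell \<Rightarrow> nat"
  assumes bij1: "bij_betw \<sigma>1 {1..n} {1..n}" and bij2: "bij_betw \<sigma>2 {1..n} {1..n}"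
    and bij3: "bij_betw \<sigma>3 {1..n} {1..n}" and bij_tau: "bij_betw \<tau> {1..n} {1..n}"
    and L_boolean: "i \<in> {1..n} \<Longrightarrow> j \<in> {1..n} \<Longrightarrow> k \<in> {1..n} \<Longrightarrow>
                    L (i, j, k) = \<tau> (boolean_cube (\<sigma>1 i, \<sigma>2 j, \<sigma>3 k))"
begin

fun cell_of :: "point \<Rightarrow> cell" where
  "cell_of (a, b, c) = (coord_inv n \<sigma>1 a, coord_inv n \<sigma>2 b, coord_inv n \<sigma>3 c)"

fun point_of :: "cell \<Rightarrow> point" where
  "point_of (i, j, k) = (coord \<sigma>1 i, coord \<sigma>2 j, coord \<sigma>3 k)"

lemmas coord_inv_mem_sigma = coord_inv_mem[OF bij1] coord_inv_mem[OF bij2] coord_inv_mem[OF bij3]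
lemmas coord_coord_inv_sigma [simp] = coord_coord_inv[OF bij1] coord_coord_inv[OF bij2] coord_coord_inv[OF bij3]
lemmas coord_less_sigma = coord_less[OF bij1] coord_less[OF bij2] coord_less[OF bij3]
lemmas coord_inv_coord_sigma [simp] = coord_inv_coord[OF bij1] coord_inv_coord[OF bij2] coord_inv_coord[OF bij3]
lemmas coord_inv_eq_iff_sigma = coord_inv_eq_iff[OF bij1] coord_inv_eq_iff[OF bij2] coord_inv_eq_iff[OF bij3]

lemma cell_of_cells: "p \<in> grid \<Longrightarrow> cell_of p \<in> cells n"
proof (cases p)
  case (fields a b c)
  then show "p \<in> grid \<Longrightarrow> ?thesis"
    using coord_inv_mem_sigma[of a] coord_inv_mem_sigma[of b] coord_inv_mem_sigma[of c] by (simp add: cells_def mem_grid_iff)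
qed

lemma point_of_grid: "x \<in> cells n \<Longrightarrow> point_of x \<in> grid"
  by (cases x) (simp add: cells_def mem_grid_iff coord_less_sigma)

lemma cell_of_point_of: "x \<in> cells n \<Longrightarrow> cell_of (point_of x) = x"
  by (cases x) (simp add: cells_def)

lemma point_of_cell_of: "p \<in> grid \<Longrightarrow> point_of (cell_of p) = p"
  by (cases p) (simp add: mem_grid_iff)

lemma cell_of_eq_iff: "p \<in> grid \<Longrightarrow> q \<in> grid \<Longrightarrow> cell_of p = cell_of q \<longleftrightarrow> p = q"
  by (metis point_of_cell_of)

lemma inj_on_cell_of: "inj_on cell_of grid"
  by (rule inj_onI) (simp add: cell_of_eq_iff)

lemma cell_of_mem_image_iff: "q \<in> grid \<Longrightarrow> A \<subseteq> grid \<Longrightarrow> cell_of q \<in> cell_of ` A \<longleftrightarrow> q \<in> A"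
  by (rule inj_on_image_mem_iff[OF inj_on_cell_of])

lemma tau_inj: "x < n \<Longrightarrow> y < n \<Longrightarrow> \<tau> (Suc x) = \<tau> (Suc y) \<longleftrightarrow> x = y"
  using inj_onD[OF bij_betw_imp_inj_on[OF bij_tau], of "Suc x" "Suc y"] by auto

lemma tau_mem: "x < n \<Longrightarrow> \<tau> (Suc x) \<in> {1..n}"
  using bij_betw_apply[OF bij_tau, of "Suc x"] by simp

lemma L_point_of: "x \<in> cells n \<Longrightarrow> L x = \<tau> (Suc (psum (point_of x)))"
  by (cases x) (simp add: cells_def L_boolean boolean_cube_def coord_def xor.assoc)

lemma L_cell_of: "p \<in> grid \<Longrightarrow> L (cell_of p) = \<tau> (Suc (psum p))"
  using L_point_of[OF cell_of_cells] point_of_cell_of by simp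

lemma L_cell_of_eq_iff: "p \<in> grid \<Longrightarrow> q \<in> grid \<Longrightarrow> L (cell_of p) = L (cell_of q) \<longleftrightarrow> psum p = psum q"
  by (simp add: L_cell_of tau_inj dot_less)

lemma L_coord_inv:
  "x < n \<Longrightarrow> y < n \<Longrightarrow> z < n \<Longrightarrow>
   L (coord_inv n \<sigma>1 x, coord_inv n \<sigma>2 y, coord_inv n \<sigma>3 z) = \<tau> (Suc (x XOR y XOR z))"
  using L_cell_of[of "(x, y, z)"] by (simp add: mem_grid_iff)

lemma image_cell_of_subcube:
  "cell_of ` subcube (a, b, c) d =
     {coord_inv n \<sigma>1 a, coord_inv n \<sigma>1 (a XOR d)} \<times> {coord_inv n \<sigma>2 b, coord_inv n \<sigma>2 (b XOR d)} \<times>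
     {coord_inv n \<sigma>3 c, coord_inv n \<sigma>3 (c XOR d)}"
  by auto

lemma subcube_three_cube:
  assumes p: "p \<in> grid" and d: "d < n" "d \<noteq> 0"
  shows "cell_of ` subcube p d \<in> three_cubes n L"
proof -
  obtain a b c where abc: "p = (a, b, c)"
    by (cases p)
  have lt: "a < n" "b < n" "c < n" "a XOR d < n" "b XOR d < n" "c XOR d < n"
    using p abc d xor_less by (auto simp: mem_grid_iff)
  let ?i1 = "coord_inv n \<sigma>1 a" and ?i2 = "coord_inv n \<sigma>1 (a XOR d)"
  let ?j1 = "coord_inv n \<sigma>2 b" and ?j2 = "coord_inv n \<sigma>2 (b XOR d)"
  let ?k1 = "coord_inv n \<sigma>3 c" and ?k2 = "coord_inv n \<sigma>3 (c XOR d)"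
  have ne: "?i1 \<noteq> ?i2" "?j1 \<noteq> ?j2" "?k1 \<noteq> ?k2"
    using lt d(2) by (simp_all add: coord_inv_eq_iff_sigma)
  have mem: "?i1 \<in> {1..n}" "?i2 \<in> {1..n}" "?j1 \<in> {1..n}" "?j2 \<in> {1..n}" "?k1 \<in> {1..n}" "?k2 \<in> {1..n}"
    using lt by (blast intro: coord_inv_mem_sigma)+
  let ?x1 = "L (?i1, ?j1, ?k1)" and ?x2 = "L (?i1, ?j2, ?k1)"
  have "L (?i2, ?j2, ?k1) = ?x1" "L (?i1, ?j2, ?k2) = ?x1" "L (?i2, ?j1, ?k2) = ?x1"
    "L (?i2, ?j1, ?k1) = ?x2" "L (?i1, ?j1, ?k2) = ?x2" "L (?i2, ?j2, ?k2) = ?x2"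
    using lt by (simp_all add: L_coord_inv xor_ac)
  moreover have "cell_of ` subcube p d =
      {(x, y, z) | x y z. x \<in> {?i1, ?i2} \<and> y \<in> {?j1, ?j2} \<and> z \<in> {?k1, ?k2}}"
    unfolding abc image_cell_of_subcube by blast
  ultimately show ?thesis
    unfolding three_cubes_def using mem ne by blast
qed

lemma three_cube_subcube:
  assumes "S \<in> three_cubes n L"
  shows "\<exists>p\<in>grid. \<exists>d<n. d \<noteq> 0 \<and> S = cell_of ` subcube p d"
proof -
  obtain i1 i2 j1 j2 k1 k2 x1 where h:
      "i1 \<in> {1..n}" "i2 \<in> {1..n}" "j1 \<in> {1..n}" "j2 \<in> {1..n}" "k1 \<in> {1..n}" "k2 \<in> {1..n}"
      "i1 \<noteq> i2" "L (i1, j1, k1) = x1" "L (i2, j2, k1) = x1" "L (i1, j2, k2) = x1"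
      "S = {(a, b, c) | a b c. a \<in> {i1, i2} \<and> b \<in> {j1, j2} \<and> c \<in> {k1, k2}}"
    using assms unfolding three_cubes_def by blast
  define a1 a2 b1 b2 c1 c2 where coords: "a1 = coord \<sigma>1 i1" "a2 = coord \<sigma>1 i2" "b1 = coord \<sigma>2 j1"
    "b2 = coord \<sigma>2 j2" "c1 = coord \<sigma>3 k1" "c2 = coord \<sigma>3 k2"
  have lt: "a1 < n" "a2 < n" "b1 < n" "b2 < n" "c1 < n" "c2 < n"
    using h(1-6) coord_less_sigma unfolding coords by auto
  have ijk: "i1 = coord_inv n \<sigma>1 a1" "i2 = coord_inv n \<sigma>1 a2" "j1 = coord_inv n \<sigma>2 b1"
    "j2 = coord_inv n \<sigma>2 b2" "k1 = coord_inv n \<sigma>3 c1" "k2 = coord_inv n \<sigma>3 c2"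
    using h(1-6) unfolding coords by simp_all
  define d where "d = a1 XOR a2"
  have "\<tau> (Suc (a1 XOR b1 XOR c1)) = \<tau> (Suc (a2 XOR b2 XOR c1))"
    "\<tau> (Suc (a1 XOR b1 XOR c1)) = \<tau> (Suc (a1 XOR b2 XOR c2))"
    using h(8-10) lt unfolding ijk by (simp_all add: L_coord_inv)
  then have "a1 XOR b1 XOR c1 = a2 XOR b2 XOR c1" "a1 XOR b1 XOR c1 = a1 XOR b2 XOR c2"
    using lt by (simp_all add: tau_inj xor_less)
  then have a2: "a2 = a1 XOR d" and b2: "b2 = b1 XOR d" and c2: "c2 = c1 XOR d"
    unfolding d_def by (metis xor_cancel_left xor_cancel_right xor.assoc xor.commute)+
  have "S = cell_of ` subcube (a1, b1, c1) d"
    unfolding h(11) image_cell_of_subcube ijk a2 b2 c2 by auto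
  moreover have "(a1, b1, c1) \<in> grid" "d < n" "d \<noteq> 0"
    using lt h(7) ijk unfolding d_def by (auto simp: mem_grid_iff xor_less)
  ultimately show ?thesis
    by blast
qed

lemma swap_subcube:
  assumes p: "p \<in> grid" and d: "d < n" "d \<noteq> 0" and q: "q \<in> subcube p d"
  shows "swap L (cell_of ` subcube p d) (cell_of q) = \<tau> (Suc (psum q XOR d))"
proof -
  have Q: "subcube p d \<subseteq> grid"
    using subcube_subset_grid p d(1) by blast
  have qV: "q \<in> grid"
    using q Q by blast
  have psum_mem: "psum q' = psum q \<or> psum q' = psum q XOR d" if "q' \<in> subcube p d" for q'
  proof -
    have "q' \<in> subcube q d"
      using that subcube_eq_of_mem[OF q] by simp
    then obtain f where "q' = padd q (smul f d)"
      using subcube_mem_iff by blast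
    then show ?thesis
      by (simp add: dot_padd dot_smul)
  qed
  let ?y = "\<tau> (Suc (psum q XOR d))"
  let ?P = "\<lambda>y. y \<in> L ` cell_of ` subcube p d \<and> y \<noteq> L (cell_of q)"
  have "?P ?y"
  proof
    let ?q2 = "padd q (smul (True, False, False) d)"
    have "?q2 \<in> subcube q d"
      by (auto simp: subcube_mem_iff)
    then have q2: "?q2 \<in> subcube p d"
      using subcube_eq_of_mem[OF q] by simp
    have "?q2 \<in> grid"
      using q2 Q by blast
    moreover have "psum ?q2 = psum q XOR d"
      by (simp add: dot_padd)
    ultimately have "?y = L (cell_of ?q2)"
      by (simp add: L_cell_of)
    then show "?y \<in> L ` cell_of ` subcube p d"
      using q2 by blast
    show "?y \<noteq> L (cell_of q)"
      using L_cell_of[OF qV] d dot_less[OF qV] xor_less by (simp add: tau_inj)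
  qed
  moreover have "y = ?y" if P: "?P y" for y
  proof -
    obtain q' where q': "q' \<in> subcube p d" "y = L (cell_of q')" "y \<noteq> L (cell_of q)"
      using P by blast
    have "q' \<in> grid"
      using q'(1) Q by blast
    then have "psum q' = psum q XOR d"
      using q' psum_mem[of q'] L_cell_of_eq_iff[OF _ qV] by auto
    then show ?thesis
      using q' L_cell_of[OF \<open>q' \<in> grid\<close>] by simp
  qed
  ultimately have "(THE y. ?P y) = ?y"
    by (rule the_equality)
  then show ?thesis
    unfolding swap_def using q by simp
qed

lemma cell_of_padd_smul_cells:
  assumes "(a, b, c) \<in> grid" "g < n"
  shows "cell_of (padd (a, b, c) (smul e g)) \<in> cells n"
  using assms cell_of_cells padd_grid smul_grid by blast

lemma L_dline_even:
  assumes "p \<in> grid" "g < n" "\<not> ddot e diag"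
  shows "L (cell_of (padd p (smul e g))) = L (cell_of p)"
proof -
  have "padd p (smul e g) \<in> grid"
    using assms(1,2) padd_grid smul_grid by blast
  then show ?thesis
    using assms by (simp add: L_cell_of dot_padd dot_smul)
qed

context
  fixes a b c :: nat
  assumes abc: "(a, b, c) \<in> grid"
begin

lemma cell_of_dline_subset_row:
  "cell_of ` dline (False, True, False) (a, b, c) \<subseteq> row n (coord_inv n \<sigma>1 a) (coord_inv n \<sigma>3 c)"
proof
  fix x assume "x \<in> cell_of ` dline (False, True, False) (a, b, c)"
  then obtain g where g: "g < n" and x: "x = cell_of (padd (a, b, c) (smul (False, True, False) g))"
    by (auto simp: dline_mem_iff)
  have "x \<in> cells n"
    unfolding x by (rule cell_of_padd_smul_cells[OF abc g])
  then show "x \<in> row n (coord_inv n \<sigma>1 a) (coord_inv n \<sigma>3 c)"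
    unfolding x row_def cells_def by auto
qed

lemma cell_of_dline_subset_col:
  "cell_of ` dline (True, False, False) (a, b, c) \<subseteq> col n (coord_inv n \<sigma>2 b) (coord_inv n \<sigma>3 c)"
proof
  fix x assume "x \<in> cell_of ` dline (True, False, False) (a, b, c)"
  then obtain g where g: "g < n" and x: "x = cell_of (padd (a, b, c) (smul (True, False, False) g))"
    by (auto simp: dline_mem_iff)
  have "x \<in> cells n"
    unfolding x by (rule cell_of_padd_smul_cells[OF abc g])
  then show "x \<in> col n (coord_inv n \<sigma>2 b) (coord_inv n \<sigma>3 c)"
    unfolding x col_def cells_def by auto
qed

lemma cell_of_dline_subset_fil:
  "cell_of ` dline (False, False, True) (a, b, c) \<subseteq> fil n (coord_inv n \<sigma>1 a) (coord_inv n \<sigma>2 b)"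
proof
  fix x assume "x \<in> cell_of ` dline (False, False, True) (a, b, c)"
  then obtain g where g: "g < n" and x: "x = cell_of (padd (a, b, c) (smul (False, False, True) g))"
    by (auto simp: dline_mem_iff)
  have "x \<in> cells n"
    unfolding x by (rule cell_of_padd_smul_cells[OF abc g])
  then show "x \<in> fil n (coord_inv n \<sigma>1 a) (coord_inv n \<sigma>2 b)"
    unfolding x fil_def cells_def by auto
qed

lemma cell_of_dline_subset_row_layer:
  "cell_of ` dline (False, True, True) (a, b, c) \<subseteq> {x \<in> row_layer n (coord_inv n \<sigma>1 a). L x = L (cell_of (a, b, c))}"
proof
  fix x assume "x \<in> cell_of ` dline (False, True, True) (a, b, c)"
  then obtain g where g: "g < n" and x: "x = cell_of (padd (a, b, c) (smul (False, True, True) g))"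
    by (auto simp: dline_mem_iff)
  have "x \<in> cells n"
    unfolding x by (rule cell_of_padd_smul_cells[OF abc g])
  moreover have "L x = L (cell_of (a, b, c))"
    unfolding x by (rule L_dline_even[OF abc g]) simp
  ultimately show "x \<in> {x \<in> row_layer n (coord_inv n \<sigma>1 a). L x = L (cell_of (a, b, c))}"
    unfolding x row_layer_def cells_def by auto
qed

lemma cell_of_dline_subset_col_layer:
  "cell_of ` dline (True, False, True) (a, b, c) \<subseteq> {x \<in> col_layer n (coord_inv n \<sigma>2 b). L x = L (cell_of (a, b, c))}"
proof
  fix x assume "x \<in> cell_of ` dline (True, False, True) (a, b, c)"
  then obtain g where g: "g < n" and x: "x = cell_of (padd (a, b, c) (smul (True, False, True) g))"
    by (auto simp: dline_mem_iff)
  have "x \<in> cells n"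
    unfolding x by (rule cell_of_padd_smul_cells[OF abc g])
  moreover have "L x = L (cell_of (a, b, c))"
    unfolding x by (rule L_dline_even[OF abc g]) simp
  ultimately show "x \<in> {x \<in> col_layer n (coord_inv n \<sigma>2 b). L x = L (cell_of (a, b, c))}"
    unfolding x col_layer_def cells_def by auto
qed

lemma cell_of_dline_subset_file_layer:
  "cell_of ` dline (True, True, False) (a, b, c) \<subseteq> {x \<in> file_layer n (coord_inv n \<sigma>3 c). L x = L (cell_of (a, b, c))}"
proof
  fix x assume "x \<in> cell_of ` dline (True, True, False) (a, b, c)"
  then obtain g where g: "g < n" and x: "x = cell_of (padd (a, b, c) (smul (True, True, False) g))"
    by (auto simp: dline_mem_iff)
  have "x \<in> cells n"
    unfolding x by (rule cell_of_padd_smul_cells[OF abc g])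
  moreover have "L x = L (cell_of (a, b, c))"
    unfolding x by (rule L_dline_even[OF abc g]) simp
  ultimately show "x \<in> {x \<in> file_layer n (coord_inv n \<sigma>3 c). L x = L (cell_of (a, b, c))}"
    unfolding x file_layer_def cells_def by auto
qed

end

lemma three_cubes_through_diagonal:
  assumes q: "q \<in> grid" and \<delta>: "\<delta> < n" "\<delta> \<noteq> 0"
  shows "{S \<in> three_cubes n L. cell_of q \<in> S \<and> cell_of (padd q (smul diag \<delta>)) \<in> S}
           = {cell_of ` subcube q \<delta>}"
proof
  let ?q' = "padd q (smul diag \<delta>)"
  have q': "?q' \<in> grid"
    using q \<delta>(1) padd_grid smul_grid by blast
  have "?q' \<in> subcube q \<delta>"
    by (auto simp: subcube_mem_iff)
  then show "{cell_of ` subcube q \<delta>} \<subseteq> {S \<in> three_cubes n L. cell_of q \<in> S \<and> cell_of ?q' \<in> S}"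
    using subcube_three_cube[OF q \<delta>] subcube_self[of q \<delta>] by auto
  show "{S \<in> three_cubes n L. cell_of q \<in> S \<and> cell_of ?q' \<in> S} \<subseteq> {cell_of ` subcube q \<delta>}"
  proof
    fix S assume S: "S \<in> {S \<in> three_cubes n L. cell_of q \<in> S \<and> cell_of ?q' \<in> S}"
    then obtain r e where r: "r \<in> grid" "e < n" "e \<noteq> 0" and S_eq: "S = cell_of ` subcube r e"
      using three_cube_subcube by blast
    have sub: "subcube r e \<subseteq> grid"
      using subcube_subset_grid r by blast
    have "q \<in> subcube r e" "?q' \<in> subcube r e"
      using S cell_of_mem_image_iff[OF q sub] cell_of_mem_image_iff[OF q' sub] unfolding S_eq by auto
    then have re: "subcube r e = subcube q e" and "?q' \<in> subcube q e"
      using subcube_eq_of_mem by auto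
    then obtain f where "padd q (smul f e) = ?q'"
      using subcube_mem_iff by metis
    then have "e = \<delta>"
      using smul_eq_smul_diag \<delta>(2) by simp
    then show "S \<in> {cell_of ` subcube q \<delta>}"
      unfolding S_eq re by simp
  qed
qed

lemma lines_share_coordinate:
  "l \<in> lines n \<Longrightarrow> x \<in> l \<Longrightarrow> y \<in> l \<Longrightarrow> fst x = fst y \<or> snd (snd x) = snd (snd y)"
  unfolding lines_def row_def col_def fil_def by auto

lemma diagonal_cells_differ:
  assumes p: "p \<in> grid" and xy: "x \<in> cell_of ` dline diag p" "y \<in> cell_of ` dline diag p" "x \<noteq> y"
  shows "fst x \<noteq> fst y \<and> snd (snd x) \<noteq> snd (snd y)"
proof -
  obtain g h where g: "g < n" "x = cell_of (padd p (smul diag g))"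
    and h: "h < n" "y = cell_of (padd p (smul diag h))"
    using xy(1,2) unfolding dline_def by blast
  obtain a b c where abc: "p = (a, b, c)"
    by (cases p)
  have "g \<noteq> h"
    using g h xy(3) by auto
  moreover have "a XOR g < n" "a XOR h < n" "c XOR g < n" "c XOR h < n"
    using p g(1) h(1) xor_less abc by (auto simp: mem_grid_iff)
  ultimately show ?thesis
    unfolding g h abc by (simp add: coord_inv_eq_iff_sigma)
qed

lemma transversal_set_diagonal:
  assumes p: "p \<in> grid"
  shows "transversal_set n L (cell_of ` dline diag p)"
proof -
  let ?T = "cell_of ` dline diag p"
  have Tgrid: "dline diag p \<subseteq> grid"
    using dline_subset_grid[OF p] .
  have mem: "x \<in> ?T \<Longrightarrow> \<exists>g<n. x = cell_of (padd p (smul diag g))" for x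
    unfolding dline_def by blast
  have pg: "padd p (smul diag g) \<in> grid" if "g < n" for g
    using p that padd_grid smul_grid by blast
  have cells: "?T \<subseteq> cells n"
    using Tgrid cell_of_cells by blast
  have card: "card ?T = n"
    using card_image[OF inj_on_subset[OF inj_on_cell_of Tgrid]] card_dline[of diag p] by simp
  have lines: "card (?T \<inter> l) \<le> 1" if l: "l \<in> lines n" for l
  proof -
    have "\<forall>x\<in>?T \<inter> l. \<forall>y\<in>?T \<inter> l. x = y"
      using diagonal_cells_differ[OF p] lines_share_coordinate[OF l] by blast
    then show ?thesis
      by (simp add: card_le_Suc0_iff_eq)
  qed
  have inj: "inj_on L ?T"
  proof (rule inj_onI)
    fix x y assume "x \<in> ?T" "y \<in> ?T" "L x = L y"
    then obtain g h where g: "g < n" "x = cell_of (padd p (smul diag g))"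
      and h: "h < n" "y = cell_of (padd p (smul diag h))" and "L x = L y"
      using mem by blast
    then have "psum p XOR g = psum p XOR h"
      using L_cell_of_eq_iff[OF pg pg] by (simp add: dot_padd)
    then show "x = y"
      using g h by simp
  qed
  have unique: "card {S \<in> three_cubes n L. x \<in> S \<and> y \<in> S} = 1"
    if xy: "x \<in> ?T" "y \<in> ?T" "x \<noteq> y" for x y
  proof -
    obtain g h where g: "g < n" "x = cell_of (padd p (smul diag g))"
      and h: "h < n" "y = cell_of (padd p (smul diag h))"
      using mem xy(1,2) by blast
    let ?q = "padd p (smul diag g)"
    have \<delta>: "g XOR h < n" "g XOR h \<noteq> 0"
      using g h xy(3) xor_less by auto
    have "y = cell_of (padd ?q (smul diag (g XOR h)))"
      using h by (simp add: padd_assoc smul_xor)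
    then show ?thesis
      using three_cubes_through_diagonal[OF pg[OF g(1)] \<delta>] g(2) by simp
  qed
  show ?thesis
    unfolding transversal_set_def using cells card lines inj unique by blast
qed

lemma dline_in_line_symbol_set_or_transversal:
  assumes e: "e \<noteq> dzero" and p: "p \<in> grid"
  shows "\<exists>Y. cell_of ` dline e p \<subseteq> Y \<and> (Y \<in> lines n \<or> Y \<in> symbol_sets n L \<or> transversal_set n L Y)"
proof -
  obtain a b c where abc: "p = (a, b, c)"
    by (cases p)
  have p': "(a, b, c) \<in> grid"
    using p abc by simp
  have "a < n" "b < n" "c < n"
    using p' by (simp_all add: mem_grid_iff)
  then have r: "coord_inv n \<sigma>1 a \<in> {1..n}" "coord_inv n \<sigma>2 b \<in> {1..n}" "coord_inv n \<sigma>3 c \<in> {1..n}"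
    by (simp_all only: coord_inv_mem_sigma)
  have "L (cell_of p) \<in> {1..n}"
    using L_cell_of[OF p] tau_mem[OF dot_less[OF p]] by simp
  then have sym: "{x \<in> Y. L x = L (cell_of p)} \<in> symbol_sets n L" if "Y \<in> layers n" for Y
    using that unfolding symbol_sets_def by blast
  have "e \<in> nonzero_dirs"
    using e by simp
  then consider "e = (True, False, False)" | "e = (False, True, False)" | "e = (False, False, True)"
    | "e = (True, True, False)" | "e = (True, False, True)" | "e = (False, True, True)" | "e = diag"
    unfolding nonzero_dirs_eq by blast
  then show ?thesis
  proof cases
    case 1
    have "col n (coord_inv n \<sigma>2 b) (coord_inv n \<sigma>3 c) \<in> lines n"
      unfolding lines_def using r by blast
    then show ?thesis
      using cell_of_dline_subset_col[OF p'] 1 abc by blast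
  next
    case 2
    have "row n (coord_inv n \<sigma>1 a) (coord_inv n \<sigma>3 c) \<in> lines n"
      unfolding lines_def using r by blast
    then show ?thesis
      using cell_of_dline_subset_row[OF p'] 2 abc by blast
  next
    case 3
    have "fil n (coord_inv n \<sigma>1 a) (coord_inv n \<sigma>2 b) \<in> lines n"
      unfolding lines_def using r by blast
    then show ?thesis
      using cell_of_dline_subset_fil[OF p'] 3 abc by blast
  next
    case 4
    have "file_layer n (coord_inv n \<sigma>3 c) \<in> layers n"
      unfolding layers_def using r by blast
    then show ?thesis
      using cell_of_dline_subset_file_layer[OF p'] sym 4 abc by blast
  next
    case 5
    have "col_layer n (coord_inv n \<sigma>2 b) \<in> layers n"
      unfolding layers_def using r by blast
    then show ?thesis
      using cell_of_dline_subset_col_layer[OF p'] sym 5 abc by blast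
  next
    case 6
    have "row_layer n (coord_inv n \<sigma>1 a) \<in> layers n"
      unfolding layers_def using r by blast
    then show ?thesis
      using cell_of_dline_subset_row_layer[OF p'] sym 6 abc by blast
  next
    case 7
    then show ?thesis
      using transversal_set_diagonal[OF p] by blast
  qed
qed

lemma card_point_of_image_Int:
  assumes "X \<subseteq> cells n" "Y \<subseteq> grid"
  shows "card (point_of ` X \<inter> Y) = card (cell_of ` Y \<inter> X)"
proof -
  have "cell_of ` (point_of ` X \<inter> Y) = cell_of ` Y \<inter> X"
  proof (intro equalityI subsetI)
    fix z assume "z \<in> cell_of ` (point_of ` X \<inter> Y)"
    then obtain x where x: "x \<in> X" "point_of x \<in> Y" "z = cell_of (point_of x)"
      by blast
    then have "z = x"
      using assms(1) cell_of_point_of by blast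
    then show "z \<in> cell_of ` Y \<inter> X"
      using x by blast
  next
    fix z assume "z \<in> cell_of ` Y \<inter> X"
    then obtain y where y: "y \<in> Y" "z = cell_of y" "z \<in> X"
      by blast
    then have "point_of z = y"
      using assms(2) point_of_cell_of by blast
    then show "z \<in> cell_of ` (point_of ` X \<inter> Y)"
      using y by blast
  qed
  moreover have "inj_on cell_of (point_of ` X \<inter> Y)"
    using inj_on_subset[OF inj_on_cell_of] assms(2) by blast
  ultimately show ?thesis
    using card_image by fastforce
qed

lemma card_conflicts_dline_le:
  fixes \<kappa> :: real
  assumes X: "X \<subseteq> cells n"
    and lines: "\<forall>l\<in>lines n. real (card (l \<inter> X)) \<le> \<kappa> * n"
    and symbols: "\<forall>Y\<in>symbol_sets n L. real (card (Y \<inter> X)) \<le> \<kappa> * n"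
    and transversals: "\<forall>T. transversal_set n L T \<longrightarrow> real (card (T \<inter> X)) \<le> \<kappa> * n"
    and e: "e \<noteq> dzero" and p: "p \<in> grid"
  shows "real (card (point_of ` X \<inter> dline e p)) \<le> \<kappa> * n"
proof -
  obtain Y where Y: "cell_of ` dline e p \<subseteq> Y"
    and kind: "Y \<in> lines n \<or> Y \<in> symbol_sets n L \<or> transversal_set n L Y"
    using dline_in_line_symbol_set_or_transversal[OF e p] by blast
  have "finite X"
    using X unfolding cells_def by (rule finite_subset) simp
  have "card (point_of ` X \<inter> dline e p) = card (cell_of ` dline e p \<inter> X)"
    using card_point_of_image_Int[OF X dline_subset_grid[OF p]] .
  also have "\<dots> \<le> card (Y \<inter> X)"
    using Y \<open>finite X\<close> by (intro card_mono) auto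
  finally have "real (card (point_of ` X \<inter> dline e p)) \<le> real (card (Y \<inter> X))"
    by simp
  moreover have "real (card (Y \<inter> X)) \<le> \<kappa> * n"
    using kind lines symbols transversals by blast
  ultimately show ?thesis
    by linarith
qed

lemma card_allowed_shifts_ge:
  fixes \<alpha> :: real
  assumes allowed_ge: "\<forall>x\<in>cells n. real (card {S. allowed n L A S \<and> x \<in> S}) \<ge> \<alpha> * n"
    and p: "p \<in> grid"
  shows "real (card {d. d < n \<and> d \<noteq> 0 \<and> allowed n L A (cell_of ` subcube p d)}) \<ge> \<alpha> * n"
proof -
  let ?D = "{d. d < n \<and> d \<noteq> 0 \<and> allowed n L A (cell_of ` subcube p d)}"
  have "{S. allowed n L A S \<and> cell_of p \<in> S} \<subseteq> (\<lambda>d. cell_of ` subcube p d) ` ?D"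
  proof
    fix S assume S: "S \<in> {S. allowed n L A S \<and> cell_of p \<in> S}"
    then obtain r d where r: "r \<in> grid" "d < n" "d \<noteq> 0" and S_eq: "S = cell_of ` subcube r d"
      using three_cube_subcube unfolding allowed_def by blast
    have "p \<in> subcube r d"
      using S cell_of_mem_image_iff[OF p subcube_subset_grid[OF r(1,2)]] unfolding S_eq by blast
    then have "S = cell_of ` subcube p d"
      using S_eq subcube_eq_of_mem by simp
    then show "S \<in> (\<lambda>d. cell_of ` subcube p d) ` ?D"
      using S r by blast
  qed
  moreover have "finite ?D"
    by (rule finite_subset[of _ "{..<n}"]) auto
  ultimately have "card {S. allowed n L A S \<and> cell_of p \<in> S} \<le> card ?D"
    by (meson card_image_le card_mono finite_imageI le_trans)
  then show ?thesis
    using allowed_ge cell_of_cells[OF p] by (meson of_nat_le_iff order_trans)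
qed

lemma finite_card_line_le: "l \<in> lines n \<Longrightarrow> finite l \<and> card l \<le> n"
proof -
  assume "l \<in> lines n"
  then consider i k where "l = row n i k" | j k where "l = col n j k" | i j where "l = fil n i j"
    unfolding lines_def by blast
  then obtain f :: "nat \<Rightarrow> cell" where "l = f ` {1..n}"
  proof cases
    case (1 i k)
    have "row n i k = (\<lambda>j. (i, j, k)) ` {1..n}"
      unfolding row_def by blast
    then show ?thesis
      using that 1 by simp
  next
    case (2 j k)
    have "col n j k = (\<lambda>i. (i, j, k)) ` {1..n}"
      unfolding col_def by blast
    then show ?thesis
      using that 2 by simp
  next
    case (3 i j)
    have "fil n i j = (\<lambda>k. (i, j, k)) ` {1..n}"
      unfolding fil_def by blast
    then show ?thesis
      using that 3 by simp
  qed
  then show ?thesis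
    using card_image_le[of "{1..n}" f] by simp
qed

lemma line_eq_cell_of_dline:
  assumes l: "l \<in> lines n"
  shows "\<exists>u\<in>unit_dirs. \<exists>p\<in>grid. l = cell_of ` dline u p"
proof -
  have eq: "l = cell_of ` dline u p" if "u \<in> unit_dirs" "p \<in> grid" "cell_of ` dline u p \<subseteq> l" for u p
  proof -
    have "card (cell_of ` dline u p) = n"
      using card_image[OF inj_on_subset[OF inj_on_cell_of dline_subset_grid[OF that(2)]]]
        card_dline[of u p] that(1) by (auto simp: unit_dirs_def)
    then show ?thesis
      using card_seteq[OF _ that(3)] finite_card_line_le[OF l] by simp
  qed
  have coords: "coord \<sigma>1 i < n" "coord \<sigma>2 i < n" "coord \<sigma>3 i < n" if "i \<in> {1..n}" for i
    using that coord_less_sigma by blast+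
  from l consider i k where "i \<in> {1..n}" "k \<in> {1..n}" "l = row n i k"
    | j k where "j \<in> {1..n}" "k \<in> {1..n}" "l = col n j k"
    | i j where "i \<in> {1..n}" "j \<in> {1..n}" "l = fil n i j"
    unfolding lines_def by blast
  then show ?thesis
  proof cases
    case (1 i k)
    let ?p = "(coord \<sigma>1 i, 0, coord \<sigma>3 k)"
    have p: "?p \<in> grid"
      using 1 coords n_pos by (simp add: mem_grid_iff)
    then show ?thesis
      using eq[of "(False, True, False)" ?p] cell_of_dline_subset_row[OF p] 1
      by (auto simp: unit_dirs_def)
  next
    case (2 j k)
    let ?p = "(0, coord \<sigma>2 j, coord \<sigma>3 k)"
    have p: "?p \<in> grid"
      using 2 coords n_pos by (simp add: mem_grid_iff)
    then show ?thesis
      using eq[of "(True, False, False)" ?p] cell_of_dline_subset_col[OF p] 2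
      by (auto simp: unit_dirs_def)
  next
    case (3 i j)
    let ?p = "(coord \<sigma>1 i, coord \<sigma>2 j, 0)"
    have p: "?p \<in> grid"
      using 3 coords n_pos by (simp add: mem_grid_iff)
    then show ?thesis
      using eq[of "(False, False, True)" ?p] cell_of_dline_subset_fil[OF p] 3
      by (auto simp: unit_dirs_def)
  qed
qed

section \<open>Swapping on disjoint subcubes\<close>

context
  fixes F :: "point set set" and A :: "cell \<Rightarrow> nat set"
  assumes F_subcubes: "\<forall>Q\<in>F. \<exists>p\<in>grid. \<exists>d<n. d \<noteq> 0 \<and> Q = subcube p d \<and> allowed n L A (cell_of ` Q)"
    and F_disjoint: "pairwise disjnt F"
begin

definition cell_cubes :: "cell set set" where
  "cell_cubes = (\<lambda>Q. cell_of ` Q) ` F"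

definition shift_of :: "point \<Rightarrow> nat" where
  "shift_of q = (if q \<in> \<Union>F then (SOME d. \<exists>Q\<in>F. \<exists>p. q \<in> Q \<and> Q = subcube p d) else 0)"

lemma F_subcubeE:
  assumes "Q \<in> F"
  obtains p d where "p \<in> grid" "d < n" "d \<noteq> 0" "Q = subcube p d" "allowed n L A (cell_of ` Q)"
  using F_subcubes assms by blast

lemma F_subset_grid: "Q \<in> F \<Longrightarrow> Q \<subseteq> grid"
  by (metis F_subcubeE subcube_subset_grid)

lemma F_unique: "Q \<in> F \<Longrightarrow> Q' \<in> F \<Longrightarrow> q \<in> Q \<Longrightarrow> q \<in> Q' \<Longrightarrow> Q = Q'"
  using F_disjoint unfolding pairwise_def disjnt_def by blast

lemma shift_of_eq: "Q \<in> F \<Longrightarrow> q \<in> Q \<Longrightarrow> Q = subcube p d \<Longrightarrow> shift_of q = d"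
proof -
  assume Q: "Q \<in> F" and q: "q \<in> Q" and Q_eq: "Q = subcube p d"
  have ex: "\<exists>d. \<exists>Q\<in>F. \<exists>p. q \<in> Q \<and> Q = subcube p d"
    using Q q Q_eq by blast
  have shift: "shift_of q = (SOME d. \<exists>Q\<in>F. \<exists>p. q \<in> Q \<and> Q = subcube p d)"
    using Q q unfolding shift_of_def by auto
  from someI_ex[OF ex] obtain Q' p' where "Q' \<in> F" "q \<in> Q'" "Q' = subcube p' (shift_of q)"
    unfolding shift[symmetric] by blast
  then show ?thesis
    using F_unique[OF Q _ q] Q_eq subcube_side_unique by metis
qed

lemma shift_of_outside: "q \<notin> \<Union>F \<Longrightarrow> shift_of q = 0"
  unfolding shift_of_def by simp

lemma shift_of_less: "shift_of q < n"
proof (cases "q \<in> \<Union>F")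
  case True
  then obtain Q where Q: "Q \<in> F" "q \<in> Q"
    by blast
  obtain p d where "p \<in> grid" "d < n" "d \<noteq> 0" "Q = subcube p d" "allowed n L A (cell_of ` Q)"
    using Q(1) by (rule F_subcubeE)
  then show ?thesis
    using shift_of_eq Q by simp
next
  case False
  then show ?thesis
    using shift_of_outside n_pos by simp
qed

lemma shift_of_partner: "shift_of (padd q (smul u (shift_of q))) = shift_of q"
proof (cases "q \<in> \<Union>F")
  case True
  then obtain Q where Q: "Q \<in> F" "q \<in> Q"
    by blast
  obtain p d where "p \<in> grid" "d < n" "d \<noteq> 0" and Q_eq: "Q = subcube p d"
    and "allowed n L A (cell_of ` Q)"
    using Q(1) by (rule F_subcubeE)
  have "padd q (smul u d) \<in> subcube q d"
    using subcube_mem_iff by blast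
  then have "padd q (smul u d) \<in> Q"
    using subcube_eq_of_mem Q(2) Q_eq by simp
  then show ?thesis
    using shift_of_eq[OF Q Q_eq] shift_of_eq[OF Q(1) _ Q_eq] by simp
next
  case False
  then show ?thesis
    using shift_of_outside by simp
qed

lemma swap_all_cell_of_in:
  assumes q: "q \<in> grid" and Q: "Q \<in> F" "q \<in> Q"
  shows "swap_all L cell_cubes (cell_of q) = swap L (cell_of ` Q) (cell_of q)"
proof -
  have "(THE S. S \<in> cell_cubes \<and> cell_of q \<in> S) = cell_of ` Q"
  proof (rule the_equality)
    show "cell_of ` Q \<in> cell_cubes \<and> cell_of q \<in> cell_of ` Q"
      unfolding cell_cubes_def using Q by blast
  next
    fix S assume S: "S \<in> cell_cubes \<and> cell_of q \<in> S"
    then obtain Q' where Q': "Q' \<in> F" "S = cell_of ` Q'"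
      unfolding cell_cubes_def by blast
    then have "q \<in> Q'"
      using S cell_of_mem_image_iff[OF q F_subset_grid] by blast
    then show "S = cell_of ` Q"
      using F_unique[OF Q(1) Q'(1) Q(2)] Q' by simp
  qed
  then show ?thesis
    unfolding swap_all_def cell_cubes_def using Q by auto
qed

lemma swap_all_cell_of_outside:
  assumes q: "q \<in> grid" "q \<notin> \<Union>F"
  shows "swap_all L cell_cubes (cell_of q) = L (cell_of q)"
proof -
  have "\<not> (\<exists>S\<in>cell_cubes. cell_of q \<in> S)"
    using q cell_of_mem_image_iff[OF q(1) F_subset_grid] unfolding cell_cubes_def by blast
  then show ?thesis
    unfolding swap_all_def by simp
qed

lemma swap_all_cell_of: "q \<in> grid \<Longrightarrow> swap_all L cell_cubes (cell_of q) = \<tau> (Suc (psum q XOR shift_of q))"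
proof (cases "q \<in> \<Union>F")
  case True
  assume q: "q \<in> grid"
  obtain Q where Q: "Q \<in> F" "q \<in> Q"
    using True by blast
  obtain p d where pd: "p \<in> grid" "d < n" "d \<noteq> 0" "Q = subcube p d"
    and "allowed n L A (cell_of ` Q)"
    using Q(1) by (rule F_subcubeE)
  then show ?thesis
    using swap_all_cell_of_in[OF q Q] swap_subcube[OF pd(1-3)] shift_of_eq[OF Q pd(4)] Q(2) pd(4) by simp
next
  case False
  assume q: "q \<in> grid"
  then show ?thesis
    using swap_all_cell_of_outside[OF q False] shift_of_outside[OF False] L_cell_of[OF q] by simp
qed

text \<open>On a line in a unit direction \<open>u\<close>, the swapped symbol is injective because
  \<open>q \<mapsto> q + u \<otimes> shift_of q\<close> is an involution.\<close>
lemma inj_on_swapped_symbol: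
  assumes u: "u \<in> unit_dirs" and p: "p \<in> grid"
  shows "inj_on (\<lambda>q. psum q XOR shift_of q) (dline u p)"
proof (rule inj_onI)
  fix q q' assume q: "q \<in> dline u p" and q': "q' \<in> dline u p"
    and eq: "psum q XOR shift_of q = psum q' XOR shift_of q'"
  let ?h = "\<lambda>q. padd q (smul u (shift_of q))"
  have "q' \<in> dline u q"
    using q q' dline_eq_of_mem by metis
  then obtain g where g: "q' = padd q (smul u g)"
    by (auto simp: dline_mem_iff)
  then have "psum q' = psum q XOR g"
    using u by (simp add: dot_padd psum_smul_unit)
  then have shift: "shift_of q = g XOR shift_of q'"
    using eq by (simp add: xor.assoc)
  have "?h q' = ?h q"
    unfolding g shift by (simp add: padd_assoc smul_xor)
  then have "?h (?h q') = ?h (?h q)"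
    by simp
  then show "q = q'"
    by (simp add: shift_of_partner padd_assoc smul_xor)
qed

lemma swap_all_unique_on_line:
  assumes u: "u \<in> unit_dirs" and p: "p \<in> grid" and x: "x \<in> {1..n}"
  shows "\<exists>!c. c \<in> cell_of ` dline u p \<and> swap_all L cell_cubes c = x"
proof -
  let ?v = "\<lambda>q. psum q XOR shift_of q"
  have grid: "dline u p \<subseteq> grid"
    using dline_subset_grid[OF p] .
  have less: "?v q < n" if "q \<in> grid" for q
    using that dot_less shift_of_less xor_less by blast
  have "?v ` dline u p = {..<n}"
  proof (rule card_seteq)
    show "?v ` dline u p \<subseteq> {..<n}"
      using grid less by blast
    show "card {..<n} \<le> card (?v ` dline u p)"
      using card_image[OF inj_on_swapped_symbol[OF u p]] card_dline[of u p] u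
      by (auto simp: unit_dirs_def)
  qed simp
  obtain z where z: "z \<in> {1..n}" "x = \<tau> z"
    using x bij_betw_imp_surj_on[OF bij_tau] by blast
  then have y: "z - 1 < n" "x = \<tau> (Suc (z - 1))"
    by auto
  then have "z - 1 \<in> ?v ` dline u p"
    using \<open>?v ` dline u p = {..<n}\<close> by simp
  then obtain q where q_eq: "z - 1 = ?v q" and q_mem: "q \<in> dline u p"
    by (rule imageE)
  note q = q_mem q_eq[symmetric]
  have "q \<in> grid"
    using q(1) grid by blast
  then have swap_q: "swap_all L cell_cubes (cell_of q) = x"
    using swap_all_cell_of[of q] q(2) y(2) by simp
  have unique: "c = cell_of q"
    if c: "c \<in> cell_of ` dline u p" "swap_all L cell_cubes c = x" for c
  proof -
    obtain q' where q': "q' \<in> dline u p" "c = cell_of q'"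
      using c(1) by blast
    have "q' \<in> grid"
      using q'(1) grid by blast
    then have "\<tau> (Suc (?v q')) = \<tau> (Suc (?v q))"
      using c(2) q'(2) \<open>swap_all L cell_cubes (cell_of q) = x\<close> swap_all_cell_of[of q] swap_all_cell_of[of q']
        \<open>q \<in> grid\<close> by simp
    then have "?v q' = ?v q"
      using tau_inj less grid q(1) q'(1) by blast
    then show ?thesis
      using inj_onD[OF inj_on_swapped_symbol[OF u p] _ q'(1) q(1)] q'(2) by simp
  qed
  show ?thesis
  proof (rule ex1I)
    show "cell_of q \<in> cell_of ` dline u p \<and> swap_all L cell_cubes (cell_of q) = x"
      using q(1) swap_q by blast
  qed (use unique in blast)
qed

lemma latin_cube_swap_all: "latin_cube n (swap_all L cell_cubes)"
  unfolding latin_cube_def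
proof (intro conjI ballI)
  fix x assume x: "x \<in> cells n"
  then show "swap_all L cell_cubes x \<in> {1..n}"
    using swap_all_cell_of[OF point_of_grid[OF x]] cell_of_point_of[OF x] tau_mem
      dot_less[OF point_of_grid[OF x]] shift_of_less xor_less by metis
next
  fix l x assume "l \<in> lines n" "x \<in> {1..n}"
  obtain u p where "u \<in> unit_dirs" "p \<in> grid" "l = cell_of ` dline u p"
    using line_eq_cell_of_dline[OF \<open>l \<in> lines n\<close>] by blast
  then show "\<exists>!c. c \<in> l \<and> swap_all L cell_cubes c = x"
    using swap_all_unique_on_line \<open>x \<in> {1..n}\<close> by simp
qed


lemma avoids_swap_all:
  assumes cover: "point_of ` conflicts n L A \<subseteq> \<Union>F"
  shows "avoids n (swap_all L cell_cubes) A"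
proof -
  have "x \<notin> conflicts n (swap_all L cell_cubes) A" for x
  proof
    assume "x \<in> conflicts n (swap_all L cell_cubes) A"
    then have x: "x \<in> cells n" "swap_all L cell_cubes x \<in> A x"
      unfolding conflicts_def by auto
    let ?q = "point_of x"
    have q: "?q \<in> grid" and xq: "cell_of ?q = x"
      using point_of_grid[OF x(1)] cell_of_point_of[OF x(1)] by auto
    show False
    proof (cases "?q \<in> \<Union>F")
      case True
      then obtain Q where Q: "Q \<in> F" "?q \<in> Q"
        by blast
      obtain p d where "p \<in> grid" "d < n" "d \<noteq> 0" "Q = subcube p d" and "allowed n L A (cell_of ` Q)"
        using Q(1) by (rule F_subcubeE)
      moreover have "x \<in> cell_of ` Q"
        using Q(2) xq by (metis imageI)
      ultimately have "swap L (cell_of ` Q) x \<notin> A x"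
        unfolding allowed_def by blast
      then show False
        using swap_all_cell_of_in[OF q Q] x(2) xq by simp
    next
      case False
      then have "x \<in> conflicts n L A"
        using swap_all_cell_of_outside[OF q False] x xq unfolding conflicts_def by simp
      then show False
        using cover False by blast
    qed
  qed
  then show ?thesis
    unfolding avoids_def by blast
qed

lemma cell_cubes_solution:
  assumes cover: "point_of ` conflicts n L A \<subseteq> \<Union>F"
  shows "(\<forall>S\<in>cell_cubes. allowed n L A S) \<and>
         (\<forall>S1\<in>cell_cubes. \<forall>S2\<in>cell_cubes. S1 \<noteq> S2 \<longrightarrow> S1 \<inter> S2 = {}) \<and>
         conflicts n L A \<subseteq> \<Union>cell_cubes \<and>
         latin_cube n (swap_all L cell_cubes) \<and> avoids n (swap_all L cell_cubes) A"
proof (intro conjI ballI impI)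
  show "allowed n L A S" if "S \<in> cell_cubes" for S
    using that F_subcubes unfolding cell_cubes_def by blast
  show "S1 \<inter> S2 = {}" if S: "S1 \<in> cell_cubes" "S2 \<in> cell_cubes" "S1 \<noteq> S2" for S1 S2
  proof -
    obtain Q1 Q2 where Q: "Q1 \<in> F" "Q2 \<in> F" "S1 = cell_of ` Q1" "S2 = cell_of ` Q2"
      using S(1,2) unfolding cell_cubes_def by blast
    then have "Q1 \<inter> Q2 = {}"
      using S(3) F_disjoint unfolding pairwise_def disjnt_def by blast
    then show ?thesis
      using inj_on_image_Int[OF inj_on_cell_of F_subset_grid[OF Q(1)] F_subset_grid[OF Q(2)]] Q(3,4)
      by simp
  qed
  show "conflicts n L A \<subseteq> \<Union>cell_cubes"
  proof
    fix x assume x: "x \<in> conflicts n L A"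
    then obtain Q where "Q \<in> F" "point_of x \<in> Q"
      using cover by blast
    moreover have "x = cell_of (point_of x)"
      using x cell_of_point_of unfolding conflicts_def by simp
    ultimately show "x \<in> \<Union>cell_cubes"
      unfolding cell_cubes_def by blast
  qed
  show "latin_cube n (swap_all L cell_cubes)"
    by (rule latin_cube_swap_all)
  show "avoids n (swap_all L cell_cubes) A"
    using avoids_swap_all[OF cover] .
qed

end

lemma exists_allowed_subcube_cover:
  fixes \<alpha> \<kappa> \<theta> \<epsilon> :: real
  assumes eps: "\<epsilon> * n \<ge> 3" and theta: "\<theta> > 0"
    and budget: "\<alpha> * n - 21 * \<kappa> * n - 7 * \<epsilon> * n - (84 * \<kappa> / \<epsilon>) * n
                 - (21 * \<theta> / \<epsilon>) * n - (80 * \<kappa> / \<theta>) * n - 28 > 0"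
    and lines: "\<forall>l\<in>lines n. real (card (l \<inter> conflicts n L A)) \<le> \<kappa> * n"
    and symbols: "\<forall>Y\<in>symbol_sets n L. real (card (Y \<inter> conflicts n L A)) \<le> \<kappa> * n"
    and transversals: "\<forall>T. transversal_set n L T \<longrightarrow> real (card (T \<inter> conflicts n L A)) \<le> \<kappa> * n"
    and allowed_ge: "\<forall>x\<in>cells n. real (card {S. allowed n L A S \<and> x \<in> S}) \<ge> \<alpha> * n"
  shows "\<exists>F. (\<forall>Q\<in>F. \<exists>p\<in>grid. \<exists>d<n. d \<noteq> 0 \<and> Q = subcube p d \<and> allowed n L A (cell_of ` Q)) \<and>
             pairwise disjnt F \<and> point_of ` conflicts n L A \<subseteq> \<Union>F"
proof (cases "conflicts n L A = {}")
  case True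
  then show ?thesis
    by (intro exI[of _ "{}"]) simp
next
  case False
  have X: "conflicts n L A \<subseteq> cells n"
    unfolding conflicts_def by blast
  interpret greedy_cover t n "point_of ` conflicts n L A" "\<lambda>Q. allowed n L A (cell_of ` Q)" \<alpha> \<kappa> \<theta> \<epsilon>
  proof
    show "point_of ` conflicts n L A \<subseteq> grid"
      using X point_of_grid by blast
    show "point_of ` conflicts n L A \<noteq> {}"
      using False by blast
    show "real (card (point_of ` conflicts n L A \<inter> dline e p)) \<le> \<kappa> * n" if "e \<noteq> dzero" "p \<in> grid" for e p
      using card_conflicts_dline_le[OF X lines symbols transversals that] .
    show "real (card {d. d < n \<and> d \<noteq> 0 \<and> allowed n L A (cell_of ` subcube p d)}) \<ge> \<alpha> * n"
      if "p \<in> point_of ` conflicts n L A" for p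
      using card_allowed_shifts_ge[OF allowed_ge] that X point_of_grid by blast
  qed (fact eps theta budget)+
  show ?thesis
    using exists_admissible_cover unfolding admissible_def by blast
qed

end

theorem mainTheorem3:
  fixes t n m :: nat and L :: "cell \<Rightarrow> nat" and A :: "cell \<Rightarrow> nat set"
    and \<alpha> \<gamma> \<kappa> \<theta> \<epsilon> :: real
  assumes hn: "n = 2 ^ t"
    and hL: "latin_cube n L" and hiso: "iso_boolean n L"
    and hA: "mmmm_cube n m A"
    and h\<theta>: "\<theta> > 0"
    and h\<epsilon>: "\<epsilon> * n \<ge> 3"
    and hineq: "\<alpha> * n - 21 * \<kappa> * n - 7 * \<epsilon> * n - (84 * \<kappa> / \<epsilon>) * n
                 - (21 * \<theta> / \<epsilon>) * n - (80 * \<kappa> / \<theta>) * n - 28 > 0"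
    and ha: "\<forall>l \<in> lines n. real (card (l \<inter> conflicts n L A)) \<le> \<kappa> * n"
    and hd: "\<forall>Y \<in> symbol_sets n L. real (card (Y \<inter> conflicts n L A)) \<le> \<kappa> * n"
    and he: "\<forall>T. transversal_set n L T \<longrightarrow> real (card (T \<inter> conflicts n L A)) \<le> \<kappa> * n"
    and hf: "\<forall>c \<in> cells n. real (card {S. allowed n L A S \<and> c \<in> S}) \<ge> \<alpha> * n"
  shows "\<exists>F. (\<forall>S \<in> F. allowed n L A S) \<and>
             (\<forall>S1 \<in> F. \<forall>S2 \<in> F. S1 \<noteq> S2 \<longrightarrow> S1 \<inter> S2 = {}) \<and>
             conflicts n L A \<subseteq> \<Union> F \<and>
             latin_cube n (swap_all L F) \<and> avoids n (swap_all L F) A"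
proof -
  obtain \<sigma>1 \<sigma>2 \<sigma>3 \<tau> where bij: "bij_betw \<sigma>1 {1..n} {1..n}" "bij_betw \<sigma>2 {1..n} {1..n}"
      "bij_betw \<sigma>3 {1..n} {1..n}" "bij_betw \<tau> {1..n} {1..n}"
    and L_eq: "\<forall>i \<in> {1..n}. \<forall>j \<in> {1..n}. \<forall>k \<in> {1..n}. L (i, j, k) = \<tau> (boolean_cube (\<sigma>1 i, \<sigma>2 j, \<sigma>3 k))"
    using hiso unfolding iso_boolean_def by blast
  interpret boolean_latin t n \<sigma>1 \<sigma>2 \<sigma>3 \<tau> L
    using hn bij L_eq by unfold_locales auto
  obtain F where "(\<forall>Q\<in>F. \<exists>p\<in>grid. \<exists>d<n. d \<noteq> 0 \<and> Q = subcube p d \<and> allowed n L A (cell_of ` Q)) \<and>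
      pairwise disjnt F \<and> point_of ` conflicts n L A \<subseteq> \<Union>F"
    using exists_allowed_subcube_cover[OF h\<epsilon> h\<theta> hineq ha hd he hf] ..
  then show ?thesis
    using cell_cubes_solution[of F A] by (intro exI[of _ "cell_cubes F"]) simp
qed

end
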